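(* Let $(\rho,\mu)$ be a pair of standard representations of $\mathcal{W}_N$ with $\rho\otimes\mu$ cyclic, and let $h_{\rho,\mu}\in\mathbb{C}^*$. For $\alpha\in\mathbb{Z}/N$ define linear maps $K_\alpha(\rho,\mu):V_{\rho\mu}\to V_\rho\otimes V_\mu$ and $\bar K^\alpha(\rho,\mu):V_\rho\otimes V_\mu\to V_{\rho\mu}$ by $K_\alpha(\rho,\mu)(e_k)=\sum_{i,j}K_\alpha(\rho,\mu)^k_{i,j}e_i\otimes e_j$ and $\bar K^\alpha(\rho,\mu)(e_i\otimes e_j)=\sum_k\bar K^\alpha(\rho,\mu)^{i,j}_k e_k$, where $$K_\alpha(\rho,\mu)^k_{i,j}=h_{\rho,\mu}\,\omega^{\alpha j}\,\omega\Big(a_\rho y_\mu,\frac{y_\rho}{a_\mu},y_{\rho\mu}\,\Big|\,i,\alpha\Big)\delta(i+j-k),$$ $$\bar K^\alpha(\rho,\mu)^{i,j}_k=\frac{\big[\frac{a_\rho y_\mu}{y_{\rho\mu}}\big]}{h_{\rho,\mu}}\;\frac{\omega^{-\alpha j}\,\delta(i+j-k)}{\omega\big(\frac{a_\rho y_\mu}{\omega},\frac{y_\rho}{a_\mu},y_{\rho\mu}\,\big|\,i,\alpha\big)}.$$ Then $\{K_\alpha(\rho,\mu)\}_\alpha$ is a basis of $\mathrm{Hom}_{\mathcal{W}_N}(V_{\rho\mu},V_\rho\otimes V_\mu)$, $\{\bar K^\alpha(\rho,\mu)\}_\alpha$ is a basis of $\mathrm{Hom}_{\mathcal{W}_N}(V_\rho\otimes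 V_\mu,V_{\rho\mu})$, and these bases are dual: $$\bar K^\alpha(\rho,\mu)K_\beta(\rho,\mu)=\delta(\alpha-\beta)\,\mathrm{id}_{V_{\rho\mu}},\qquad\sum_{\alpha}K_\alpha(\rho,\mu)\bar K^\alpha(\rho,\mu)=\mathrm{id}_{V_\rho}\otimes\mathrm{id}_{V_\mu}.$$
   Context: $N\ge3$ odd, $N=2P+1$, $\omega=e^{2\pi i/N}$, $\omega^{1/2}:=\omega^{P+1}$ and $\omega^{n^2/2}:=(\omega^{P+1})^{n^2}$. Indices run over $\mathbb{Z}/N$; $\delta(n)=1$ if $n\equiv0\pmod N$, else $0$; $(e_i)$ is the canonical basis of $\mathbb{C}^N$. $\mathcal{W}_N$ is the unital $\mathbb{C}$-algebra generated by $E,E^{-1},D$ with $EE^{-1}=E^{-1}E=1$, $ED=\omega DE$, Hopf structure $\Delta(E)=E\otimes E$, $\Delta(D)=E\otimes D+D\otimes1$; tensor products of representations are via $\Delta$; a representation is cyclic if $E,D$ act invertibly. With $X_{ij}=\delta(i-j-1)$, $Z_{ij}=\omega^i\delta(i-j)$, the standard representation $\rho$ with parameters $(a_\rho,y_\rho)\in(\mathbb{C}^* )^2$ is $\rho(E)=a_\rho^2Z$, $\rho(D)=a_\rho y_\rho X$ on $V_\rho=\mathbb{C}^N$. A determination $u\mapsto u^{1/N}$ of the $N$-th root is fixed; $\rho\mu$ is the standard representation with $a_{\rho\mu}=a_\rho a_\mu$, $y_{\rho\mu}=(a_\rho^Ny_\mu^N+y_\rho^Na_\mu^{-N})^{1/N}$.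 For $x,y,z\in\mathbb{C}^*$ with $x^N+y^N=z^N$: $\omega(x,y,z|n)=\prod_{j=1}^n\frac{y}{z-x\omega^j}$ for $0\le n\le N-1$, extended $N$-periodically to $n\in\mathbb{Z}$, and $\omega(x,y,z|m,n)=\omega(x,y,z|m-n)\omega^{n^2/2}$. $[x]=N^{-1}\frac{1-x^N}{1-x}$. *)

theory Defs
  imports Complex_Main
begin

text \<open>Indices of Z/N are represented by naturals in {0..<N}; integer arguments are
  reduced mod N where the paper reads them in Z/N.\<close>

definition omg :: "nat \<Rightarrow> complex" where
  "omg N = cis (2 * pi / real N)"

text \<open>omega^(1/2) := omega^(P+1), N = 2P+1\<close>
definition omg_half :: "nat \<Rightarrow> complex" where
  "omg_half N = omg N ^ ((N - 1) div 2 + 1)"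

definition dlt :: "nat \<Rightarrow> int \<Rightarrow> complex" where
  "dlt N n = (if n mod int N = 0 then 1 else 0)"

definition qdl :: "nat \<Rightarrow> complex \<Rightarrow> complex \<Rightarrow> complex \<Rightarrow> int \<Rightarrow> complex" where
  "qdl N x y z n = (\<Prod>j = 1..nat (n mod int N). y / (z - x * omg N ^ j))"

definition qdl2 :: "nat \<Rightarrow> complex \<Rightarrow> complex \<Rightarrow> complex \<Rightarrow> int \<Rightarrow> int \<Rightarrow> complex" where
  "qdl2 N x y z m n = qdl N x y z (m - n) * omg_half N ^ nat (n\<^sup>2)"

definition qbr :: "nat \<Rightarrow> complex \<Rightarrow> complex" where
  "qbr N x = (1 - x ^ N) / (of_nat N * (1 - x))"

section \<open>Matrices of linear maps (entries: output index, input index)\<close>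

type_synonym ('a, 'b) mat = "'a \<Rightarrow> 'b \<Rightarrow> complex"

definition mcomp :: "'b set \<Rightarrow> ('a, 'b) mat \<Rightarrow> ('b, 'c) mat \<Rightarrow> ('a, 'c) mat" where
  "mcomp J A B = (\<lambda>x z. \<Sum>y\<in>J. A x y * B y z)"

definition meq :: "'a set \<Rightarrow> 'b set \<Rightarrow> ('a, 'b) mat \<Rightarrow> ('a, 'b) mat \<Rightarrow> bool" where
  "meq I J A B \<longleftrightarrow> (\<forall>x\<in>I. \<forall>y\<in>J. A x y = B x y)"

definition mid :: "('a, 'a) mat" where
  "mid = (\<lambda>x y. if x = y then 1 else 0)"

definition tens :: "('a, 'b) mat \<Rightarrow> ('c, 'd) mat \<Rightarrow> ('a \<times> 'c, 'b \<times> 'd) mat" where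
  "tens A B = (\<lambda>(i, j) (k, l). A i k * B j l)"

definition minvertible :: "'a set \<Rightarrow> ('a, 'a) mat \<Rightarrow> bool" where
  "minvertible I A \<longleftrightarrow> (\<exists>B. meq I I (mcomp I A B) mid \<and> meq I I (mcomp I B A) mid)"

section \<open>Representations of W_N, given by the images of the generators E, E^{-1}, D\<close>

record 'a wrep =
  rE :: "('a, 'a) mat"
  rEi :: "('a, 'a) mat"
  rD :: "('a, 'a) mat"

definition Vidx :: "nat \<Rightarrow> nat set" where
  "Vidx N = {0..<N}"

text \<open>Standard representation with parameters (a,y): E -> a^2 Z, E^{-1} -> a^{-2} Z^{-1}, D -> a y X\<close>
definition stdrep :: "nat \<Rightarrow> complex \<Rightarrow> complex \<Rightarrow> nat wrep" where
  "stdrep N a y =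
     \<lparr> rE = (\<lambda>i j. a ^ 2 * (omg N ^ i * dlt N (int i - int j))),
       rEi = (\<lambda>i j. inverse a ^ 2 * (inverse (omg N) ^ i * dlt N (int i - int j))),
       rD = (\<lambda>i j. a * y * dlt N (int i - int j - 1)) \<rparr>"

text \<open>Tensor product via Delta(E) = E (x) E, Delta(E^{-1}) = E^{-1} (x) E^{-1}, Delta(D) = E (x) D + D (x) 1\<close>
definition tensrep :: "'a wrep \<Rightarrow> 'b wrep \<Rightarrow> ('a \<times> 'b) wrep" where
  "tensrep R S =
     \<lparr> rE = tens (rE R) (rE S),
       rEi = tens (rEi R) (rEi S),
       rD = (\<lambda>x y. tens (rE R) (rD S) x y + tens (rD R) mid x y) \<rparr>"

definition cyclic_rep :: "'a set \<Rightarrow> 'a wrep \<Rightarrow> bool" where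
  "cyclic_rep I R \<longleftrightarrow> minvertible I (rE R) \<and> minvertible I (rD R)"

text \<open>T : V_R -> V_S (indices I of source, J of target) is a W_N-module map\<close>
definition is_hom :: "'a set \<Rightarrow> 'a wrep \<Rightarrow> 'b set \<Rightarrow> 'b wrep \<Rightarrow> ('b, 'a) mat \<Rightarrow> bool" where
  "is_hom I R J S T \<longleftrightarrow>
     meq J I (mcomp J (rE S) T) (mcomp I T (rE R)) \<and>
     meq J I (mcomp J (rEi S) T) (mcomp I T (rEi R)) \<and>
     meq J I (mcomp J (rD S) T) (mcomp I T (rD R))"

definition is_hom_basis :: "nat \<Rightarrow> 'a set \<Rightarrow> 'a wrep \<Rightarrow> 'b set \<Rightarrow> 'b wrep \<Rightarrow> (nat \<Rightarrow> ('b, 'a) mat) \<Rightarrow> bool" where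
  "is_hom_basis N I R J S K \<longleftrightarrow>
     (\<forall>\<alpha><N. is_hom I R J S (K \<alpha>)) \<and>
     (\<forall>c. meq J I (\<lambda>x y. \<Sum>\<alpha><N. c \<alpha> * K \<alpha> x y) (\<lambda>_ _. 0) \<longrightarrow> (\<forall>\<alpha><N. c \<alpha> = 0)) \<and>
     (\<forall>T. is_hom I R J S T \<longrightarrow> (\<exists>c. meq J I T (\<lambda>x y. \<Sum>\<alpha><N. c \<alpha> * K \<alpha> x y)))"

text \<open>y_{rho mu} = (a_rho^N y_mu^N + y_rho^N a_mu^{-N})^{1/N} for a fixed determination rt\<close>
definition yprod :: "nat \<Rightarrow> (complex \<Rightarrow> complex) \<Rightarrow> complex \<Rightarrow> complex \<Rightarrow> complex \<Rightarrow> complex \<Rightarrow> complex" where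
  "yprod N rt ar yr am ym = rt (ar ^ N * ym ^ N + yr ^ N * inverse am ^ N)"

definition Kmap :: "nat \<Rightarrow> (complex \<Rightarrow> complex) \<Rightarrow> complex \<Rightarrow> complex \<Rightarrow> complex \<Rightarrow> complex \<Rightarrow> complex
    \<Rightarrow> nat \<Rightarrow> (nat \<times> nat, nat) mat" where
  "Kmap N rt h ar yr am ym \<alpha> = (\<lambda>(i, j) k.
     h * omg N ^ (\<alpha> * j)
       * qdl2 N (ar * ym) (yr / am) (yprod N rt ar yr am ym) (int i) (int \<alpha>)
       * dlt N (int i + int j - int k))"

definition Kbar :: "nat \<Rightarrow> (complex \<Rightarrow> complex) \<Rightarrow> complex \<Rightarrow> complex \<Rightarrow> complex \<Rightarrow> complex \<Rightarrow> complex
    \<Rightarrow> nat \<Rightarrow> (nat, nat \<times> nat) mat" where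
  "Kbar N rt h ar yr am ym \<alpha> = (\<lambda>k (i, j).
     qbr N (ar * ym / yprod N rt ar yr am ym) / h
       * (inverse (omg N) ^ (\<alpha> * j) * dlt N (int i + int j - int k)
          / qdl2 N (ar * ym / omg N) (yr / am) (yprod N rt ar yr am ym) (int i) (int \<alpha>)))"

end

theory Submission
  imports Defs "HOL-Computational_Algebra.Polynomial"
begin

text \<open>
  The cyclic quantum dilogarithm \<open>w(n) = \<omega>(x,y,z|n)\<close> on the Fermat curve
  \<open>x^N + y^N = z^N\<close> satisfies \<open>y w(n - 1) = (z - x \<omega>^n) w(n)\<close>. A map
  \<open>e_k \<mapsto> \<Sum>_{i+j\<equiv>k} F(i,j) e_i \<otimes> e_j\<close> always commutes with \<open>E\<close> and \<open>E\<^sup>-\<^sup>1\<close>, and it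
  commutes with \<open>D\<close> exactly when \<open>F\<close> satisfies a two-term recursion; for the
  coefficients of \<open>K_\<alpha>\<close> and \<open>Kbar^\<alpha>\<close> this recursion is the functional equation.

  Both products \<open>Kbar^\<alpha> K_\<beta>\<close> and \<open>\<Sum>_\<alpha> K_\<alpha> Kbar^\<alpha>\<close> reduce to the sums
  \<open>S(d) = \<Sum>_k \<omega>^{-kd} \<omega>(x,y,z|k) / \<omega>(x/\<omega>,y,z|k+d)\<close>. Shifting the
  summation index with the functional equation gives \<open>(1 - \<omega>^{-d}) z S(d) = 0\<close>, and
  \<open>S(0) = (z - x) \<Sum>_k 1/(z - x \<omega>^k) = 1/[x/z]\<close>; this is duality and completeness.

  As \<open>V_{\<rho>\<mu>}\<close> is irreducible, \<open>Kbar^\<alpha> T\<close> and \<open>T K_\<alpha>\<close> are scalars for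
  every intertwiner \<open>T\<close>, so completeness expands \<open>T\<close> in either family, and
  duality makes both families linearly independent.
\<close>

section \<open>Roots of unity\<close>

lemma power_mod_eq_if_power_eq_1:
  fixes q :: "'a :: monoid_mult"
  assumes "q ^ N = 1"
  shows "q ^ (n mod N) = q ^ n"
proof -
  have "q ^ n = q ^ (N * (n div N) + n mod N)"
    by simp
  also have "\<dots> = (q ^ N) ^ (n div N) * q ^ (n mod N)"
    by (simp only: power_add power_mult)
  finally show ?thesis using assms by simp
qed

lemma power_int_mod_eq_if_power_eq_1:
  fixes q :: "'a :: field"
  assumes "q ^ N = 1"
  shows "q powi (n mod int N) = q powi n"
proof (cases "N = 0")
  case False
  then have "q \<noteq> 0" using assms by (metis power_0_left zero_neq_one)
  then have "q powi n = (q powi int N) powi (n div int N) * q powi (n mod int N)"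
    by (metis div_mult_mod_eq power_int_add power_int_mult mult.commute)
  then show ?thesis using assms by simp
qed simp

lemma omg_nonzero [simp]: "omg N \<noteq> 0"
  by (simp add: omg_def)

lemma omg_pow_N [simp]: "omg N ^ N = 1"
  by (cases "N = 0") (simp_all add: omg_def DeMoivre)

lemma omg_pow_pow_N [simp]: "(omg N ^ k) ^ N = 1"
  by (metis mult.commute omg_pow_N power_mult power_one)

lemma inverse_omg_pow_N [simp]: "inverse (omg N) ^ N = 1"
  by (simp add: power_inverse)

lemma omg_powi_mod [simp]: "omg N powi (n mod int N) = omg N powi n"
  by (rule power_int_mod_eq_if_power_eq_1) simp

lemma omg_powi_cong: "a mod int N = b mod int N \<Longrightarrow> omg N powi a = omg N powi b"
  by (metis omg_powi_mod)

lemma omg_powi_add: "omg N powi (a + b) = omg N powi a * omg N powi b"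
  by (simp add: power_int_add)

lemma omg_powi_diff: "omg N powi (a - b) = omg N powi a / omg N powi b"
  by (simp add: power_int_diff)

lemma omg_pow_inj:
  assumes "i < N" "j < N" "omg N ^ i = omg N ^ j"
  shows "i = j"
proof -
  have "inj_on (\<lambda>k. cis (2 * pi * real k / real N)) {..<N}"
    using bij_betw_roots_unity[of N] assms(1) by (simp add: bij_betw_def)
  moreover have "cis (2 * pi * real i / real N) = cis (2 * pi * real j / real N)"
    using assms(3) by (simp add: omg_def DeMoivre mult_ac)
  ultimately show ?thesis using assms(1,2) by (auto dest: inj_onD)
qed

lemma omg_powi_conv_pow: "N > 0 \<Longrightarrow> omg N powi n = omg N ^ nat (n mod int N)"
  by (metis omg_powi_mod power_int_nonneg_exp pos_mod_sign of_nat_0_less_iff)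

lemma omg_powi_eq_1_iff:
  assumes "N > 0"
  shows "omg N powi n = 1 \<longleftrightarrow> n mod int N = 0"
proof -
  have "omg N powi n = 1 \<longleftrightarrow> omg N ^ nat (n mod int N) = omg N ^ 0"
    using assms by (simp add: omg_powi_conv_pow)
  also have "\<dots> \<longleftrightarrow> nat (n mod int N) = 0"
    using assms omg_pow_inj[of "nat (n mod int N)" N 0] by (auto simp: nat_less_iff)
  finally show ?thesis
    using assms pos_mod_sign[of "int N" n] by linarith
qed

lemma omg_half_nonzero [simp]: "omg_half N \<noteq> 0"
  by (simp add: omg_half_def)

lemma prod_roots_of_unity_poly:
  assumes "N > 0"
  shows "(\<Prod>j<N. [:- (omg N ^ j), 1:]) = monom 1 N - 1"
proof (rule poly_eqI_degree_lead_coeff[where n = N and A = "(\<lambda>j. omg N ^ j) ` {..<N}"])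
  have "inj_on (\<lambda>j. omg N ^ j) {..<N}"
    by (auto intro!: inj_onI omg_pow_inj)
  then show "card ((\<lambda>j. omg N ^ j) ` {..<N}) \<ge> N"
    by (simp add: card_image)
  have "degree (\<Prod>j<N. [:- (omg N ^ j), 1:]) = N"
    by (subst degree_prod_eq_sum_degree) auto
  moreover have "lead_coeff (\<Prod>j<N. [:- (omg N ^ j), 1:]) = 1"
    by (simp add: lead_coeff_prod)
  ultimately show "degree (\<Prod>j<N. [:- (omg N ^ j), 1:]) \<le> N"
    and "coeff (\<Prod>j<N. [:- (omg N ^ j), 1:]) N = coeff (monom 1 N - 1) N"
    using assms by simp_all
  show "degree (monom (1::complex) N - 1) \<le> N"
    by (rule order.trans[OF degree_diff_le_max]) (simp add: degree_monom_le)
  fix t assume "t \<in> (\<lambda>j. omg N ^ j) ` {..<N}"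
  then obtain k where "k < N" "t = omg N ^ k" by auto
  then show "poly (\<Prod>j<N. [:- (omg N ^ j), 1:]) t = poly (monom 1 N - 1) t"
    by (auto simp: poly_prod poly_monom)
qed

lemma prod_shifted_roots_of_unity:
  assumes "N > 0"
  shows "(\<Prod>j\<in>{1..N}. z - x * omg N ^ j) = z ^ N - x ^ N"
proof (cases "x = 0")
  case False
  have roots: "(\<Prod>j<N. t - omg N ^ j) = t ^ N - 1" for t
    using arg_cong[OF prod_roots_of_unity_poly[OF assms], of "\<lambda>p. poly p t"]
    by (simp add: poly_prod poly_monom)
  have "(\<Prod>j\<in>{1..N}. z - x * omg N ^ j) = (\<Prod>j<N. z - x * omg N ^ j)"
    by (rule prod.reindex_bij_witness[where i = "\<lambda>j. if j = 0 then N else j" and j = "\<lambda>j. j mod N"])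
      (use assms le_eq_less_or_eq in \<open>auto simp: power_mod_eq_if_power_eq_1\<close>)
  also have "\<dots> = (\<Prod>j<N. x * (z / x - omg N ^ j))"
    using False by (intro prod.cong) (simp_all add: field_simps)
  also have "\<dots> = x ^ N * ((z / x) ^ N - 1)"
    by (simp add: prod.distrib roots)
  also have "\<dots> = z ^ N - x ^ N"
    using False by (simp add: power_divide right_diff_distrib)
  finally show ?thesis .
qed (use assms in simp)

lemma sum_inverse_shifted_roots_of_unity:
  assumes N: "N > 0" and zx: "z ^ N \<noteq> x ^ N"
  shows "(\<Sum>k\<in>{0..<N}. 1 / (z - x * omg N ^ k)) = of_nat N * z ^ (N - 1) / (z ^ N - x ^ N)"
proof -
  have root_pow: "(x * omg N ^ k) ^ N = x ^ N" for k
    by (simp add: power_mult_distrib)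
  have geometric: "(\<Sum>k\<in>{0..<N}. (omg N ^ e) ^ k) = (if e = 0 then of_nat N else 0)" if "e < N" for e
  proof (cases "e = 0")
    case False
    then have "omg N ^ e \<noteq> 1"
      using omg_pow_inj[OF that N] by auto
    then show ?thesis
      using False by (simp add: geometric_sum atLeast0LessThan)
  qed simp
  have expand: "1 / (z - x * omg N ^ k)
      = (\<Sum>i<N. x ^ (N - Suc i) * z ^ i * (omg N ^ (N - Suc i)) ^ k) / (z ^ N - x ^ N)" for k
  proof -
    have "z ^ N - x ^ N = (z - x * omg N ^ k) * (\<Sum>i<N. (x * omg N ^ k) ^ (N - Suc i) * z ^ i)"
      using power_diff_sumr2[of z N "x * omg N ^ k"] root_pow[of k] by simp
    moreover have "z - x * omg N ^ k \<noteq> 0"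
      using zx root_pow[of k] by auto
    ultimately show ?thesis
      using zx by (simp add: field_simps flip: power_mult)
  qed
  have "(\<Sum>k\<in>{0..<N}. 1 / (z - x * omg N ^ k))
      = (\<Sum>i<N. x ^ (N - Suc i) * z ^ i * (\<Sum>k\<in>{0..<N}. (omg N ^ (N - Suc i)) ^ k)) / (z ^ N - x ^ N)"
    unfolding expand sum_divide_distrib[symmetric]
    by (subst sum.swap) (simp add: sum_distrib_left)
  also have "\<dots> = (\<Sum>i<N. if i = N - 1 then of_nat N * z ^ (N - 1) else 0) / (z ^ N - x ^ N)"
    using N by (intro arg_cong2[where f = "(/)"] sum.cong) (auto simp: geometric)
  finally show ?thesis
    using N by simp
qed

section \<open>The Kronecker delta and sums over a period\<close>

lemma dlt_cong: "a mod int N = b mod int N \<Longrightarrow> dlt N a = dlt N b"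
  by (simp add: dlt_def)

lemma dlt_diff: "dlt N (a - b) = (if a mod int N = b mod int N then 1 else 0)"
  by (simp add: dlt_def mod_eq_dvd_iff dvd_eq_mod_eq_0)

lemma dlt_uminus: "dlt N (- n) = dlt N n"
  by (simp add: dlt_def dvd_eq_mod_eq_0[symmetric])

lemma dlt_of_nat_diff: "a < N \<Longrightarrow> b < N \<Longrightarrow> dlt N (int a - int b) = (if a = b then 1 else 0)"
  by (simp add: dlt_diff)

lemma dlt_add_diff_mod: "dlt N (a mod int N + b mod int N - c mod int N) = dlt N (a + b - c)"
proof (rule dlt_cong)
  have "(a mod int N + b mod int N - c mod int N) mod int N = ((a mod int N + b mod int N) mod int N - c mod int N) mod int N"
    by (simp only: mod_diff_left_eq)
  also have "\<dots> = (a + b - c) mod int N"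
    by (simp only: mod_add_eq mod_diff_eq)
  finally show "(a mod int N + b mod int N - c mod int N) mod int N = (a + b - c) mod int N" .
qed

lemma dlt_add_mod: "dlt N (a + b mod int N - c) = dlt N (a + b - c)"
proof (rule dlt_cong)
  have "(a + b mod int N - c) mod int N = ((a + b mod int N) mod int N - c) mod int N"
    by (simp only: mod_diff_left_eq)
  also have "\<dots> = (a + b - c) mod int N"
    by (simp only: mod_add_right_eq mod_diff_left_eq)
  finally show "(a + b mod int N - c) mod int N = (a + b - c) mod int N" .
qed

lemma dlt_diff_mod: "dlt N (a - b mod int N) = dlt N (a - b)"
  by (rule dlt_cong) (simp only: mod_diff_right_eq)

lemma sum_dlt:
  assumes "N > 0"
  shows "(\<Sum>k\<in>{0..<N}. f k * dlt N (int k - m)) = f (nat (m mod int N))"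
proof -
  have "dlt N (int k - m) = (if k = nat (m mod int N) then 1 else 0)" if "k < N" for k
    using that assms by (auto simp: dlt_diff)
  then have "(\<Sum>k\<in>{0..<N}. f k * dlt N (int k - m)) = (\<Sum>k\<in>{0..<N}. if k = nat (m mod int N) then f k else 0)"
    by (intro sum.cong) auto
  then show ?thesis
    using assms by (simp add: nat_less_iff)
qed

lemma sum_periodic_reindex:
  assumes N: "N > 0" and per: "\<And>n. f (n mod int N) = f n"
    and g: "\<And>a b. g a mod int N = g b mod int N \<longleftrightarrow> a mod int N = b mod int N"
  shows "(\<Sum>k\<in>{0..<N}. f (g (int k))) = (\<Sum>k\<in>{0..<N}. f (int k))"
proof -
  define h where "h k = nat (g (int k) mod int N)" for k
  have h_int: "int (h k) = g (int k) mod int N" for k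
    using N by (simp add: h_def)
  have "inj_on h {0..<N}"
  proof (rule inj_onI)
    fix a b assume "a \<in> {0..<N}" "b \<in> {0..<N}" "h a = h b"
    then have "int a mod int N = int b mod int N"
      using g[of "int a" "int b"] h_int[of a] h_int[of b] by simp
    then show "a = b" using \<open>a \<in> {0..<N}\<close> \<open>b \<in> {0..<N}\<close> by simp
  qed
  moreover have "h ` {0..<N} \<subseteq> {0..<N}"
    using N by (auto simp: h_def nat_less_iff)
  ultimately have perm: "h ` {0..<N} = {0..<N}"
    by (simp add: endo_inj_surj)
  have "(\<Sum>k\<in>{0..<N}. f (g (int k))) = (\<Sum>k\<in>{0..<N}. f (int (h k)))"
    by (simp add: h_int per)
  also have "\<dots> = (\<Sum>k\<in>h ` {0..<N}. f (int k))"
    using \<open>inj_on h {0..<N}\<close> by (simp add: sum.reindex)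
  finally show ?thesis
    unfolding perm .
qed

lemma sum_periodic_shift:
  assumes "N > 0" and "\<And>n. f (n mod int N) = f n"
  shows "(\<Sum>k\<in>{0..<N}. f (int k + c)) = (\<Sum>k\<in>{0..<N}. f (int k))"
  by (rule sum_periodic_reindex) (use assms in \<open>simp_all add: mod_eq_dvd_iff\<close>)

lemma sum_periodic_reflect:
  assumes "N > 0" and "\<And>n. f (n mod int N) = f n"
  shows "(\<Sum>k\<in>{0..<N}. f (c - int k)) = (\<Sum>k\<in>{0..<N}. f (int k))"
proof -
  have "(c - a) mod int N = (c - b) mod int N \<longleftrightarrow> a mod int N = b mod int N" for a b
    by (simp add: mod_eq_dvd_iff) (metis dvd_minus_iff minus_diff_eq)
  then show ?thesis
    using assms by (intro sum_periodic_reindex) auto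
qed

section \<open>The cyclic quantum dilogarithm\<close>

lemma qdl_mod [simp]: "qdl N x y z (n mod int N) = qdl N x y z n"
  by (simp add: qdl_def)

lemma qdl_cong: "a mod int N = b mod int N \<Longrightarrow> qdl N x y z a = qdl N x y z b"
  by (metis qdl_mod)

lemma qdl_0 [simp]: "qdl N x y z 0 = 1"
  by (simp add: qdl_def)

definition qdl_ratio :: "nat \<Rightarrow> complex \<Rightarrow> complex \<Rightarrow> complex \<Rightarrow> int \<Rightarrow> int \<Rightarrow> complex" where
  "qdl_ratio N x y z d m = qdl N x y z m / qdl N (x / omg N) y z (m + d)"

definition qdl_ratio_sum :: "nat \<Rightarrow> complex \<Rightarrow> complex \<Rightarrow> complex \<Rightarrow> int \<Rightarrow> complex" where
  "qdl_ratio_sum N x y z d = (\<Sum>k\<in>{0..<N}. omg N powi (- (int k * d)) * qdl_ratio N x y z d (int k))"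

lemma qdl_ratio_mod [simp]: "qdl_ratio N x y z d (m mod int N) = qdl_ratio N x y z d m"
  unfolding qdl_ratio_def by (metis mod_add_left_eq qdl_mod)

lemma qdl_ratio_sum_cong:
  assumes "d mod int N = d' mod int N"
  shows "qdl_ratio_sum N x y z d = qdl_ratio_sum N x y z d'"
proof -
  have "omg N powi (- (m * d)) = omg N powi (- (m * d'))" for m
    using assms by (intro omg_powi_cong mod_minus_cong mod_mult_cong) simp_all
  moreover have "qdl N (x / omg N) y z (m + d) = qdl N (x / omg N) y z (m + d')" for m
    using assms by (intro qdl_cong mod_add_cong) simp_all
  ultimately show ?thesis
    by (simp add: qdl_ratio_sum_def qdl_ratio_def)
qed

lemma qdl_ratio_twisted_mod:
  "omg N powi (- ((m mod int N) * d)) * qdl_ratio N x y z d (m mod int N)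
    = omg N powi (- (m * d)) * qdl_ratio N x y z d m"
proof -
  have "omg N powi (- ((m mod int N) * d)) = omg N powi (- (m * d))"
    by (intro omg_powi_cong mod_minus_cong mod_mult_cong) simp_all
  then show ?thesis
    by simp
qed

lemma qdl_ratio_sum_shift:
  assumes "N > 0"
  shows "(\<Sum>k\<in>{0..<N}. omg N powi (- ((int k + c) * d)) * qdl_ratio N x y z d (int k + c))
    = qdl_ratio_sum N x y z d"
  unfolding qdl_ratio_sum_def
  by (rule sum_periodic_shift[OF assms, where f = "\<lambda>m. omg N powi (- (m * d)) * qdl_ratio N x y z d m"])
    (rule qdl_ratio_twisted_mod)

lemma qdl_ratio_sum_reflect:
  assumes "N > 0"
  shows "(\<Sum>k\<in>{0..<N}. omg N powi (- ((c - int k) * d)) * qdl_ratio N x y z d (c - int k))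
    = qdl_ratio_sum N x y z d"
  unfolding qdl_ratio_sum_def
  by (rule sum_periodic_reflect[OF assms, where f = "\<lambda>m. omg N powi (- (m * d)) * qdl_ratio N x y z d m"])
    (rule qdl_ratio_twisted_mod)

locale fermat_point =
  fixes N :: nat and x y z :: complex
  assumes N_pos: "N > 0" and y_nonzero: "y \<noteq> 0"
    and fermat: "z ^ N = x ^ N + y ^ N"
begin

lemma z_pow_ne_x_pow: "z ^ N \<noteq> x ^ N"
  using fermat y_nonzero by simp

lemma qdl_factor_nonzero: "z - x * omg N ^ j \<noteq> 0"
proof
  assume "z - x * omg N ^ j = 0"
  then have "z ^ N = (x * omg N ^ j) ^ N"
    by simp
  then show False
    using z_pow_ne_x_pow by (simp add: power_mult_distrib)
qed

lemma qdl_nonzero: "qdl N x y z n \<noteq> 0"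
  unfolding qdl_def using y_nonzero qdl_factor_nonzero by simp

lemma qdl_functional_equation: "y * qdl N x y z (n - 1) = (z - x * omg N powi n) * qdl N x y z n"
proof -
  define r where "r = nat (n mod int N)"
  have n_mod: "n mod int N = int r"
    using N_pos by (simp add: r_def)
  have omg_n: "omg N powi n = omg N ^ r"
    using N_pos by (simp add: omg_powi_conv_pow r_def)
  have "(n - 1) mod int N = (int r - 1) mod int N"
    by (metis mod_diff_left_eq n_mod)
  show ?thesis
  proof (cases r)
    case (Suc m)
    have "r < N"
      using N_pos by (simp add: r_def nat_less_iff)
    then have "(n - 1) mod int N = int m"
      using \<open>(n - 1) mod int N = (int r - 1) mod int N\<close> Suc by simp
    then have "qdl N x y z n = qdl N x y z (n - 1) * (y / (z - x * omg N ^ Suc m))"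
      unfolding qdl_def n_mod nat_int Suc by simp
    then show ?thesis
      using omg_n Suc qdl_factor_nonzero[of "Suc m"] by (simp add: field_simps)
  next
    case 0
    define Q where "Q = (\<Prod>j = 1..N - 1. z - x * omg N ^ j)"
    have "(n - 1) mod int N = int (N - 1)"
      using \<open>(n - 1) mod int N = (int r - 1) mod int N\<close> 0 N_pos by (simp add: zmod_minus1)
    then have "qdl N x y z (n - 1) = y ^ (N - 1) / Q"
      by (simp add: qdl_def Q_def prod_dividef)
    then have "y * qdl N x y z (n - 1) = y ^ N / Q"
      using N_pos by (simp flip: power_Suc)
    moreover have "Q * (z - x) = y ^ N"
    proof -
      have "Q * (z - x * omg N ^ N) = z ^ N - x ^ N"
        using N_pos prod_shifted_roots_of_unity[OF N_pos, of z x] by (cases N) (simp_all add: Q_def mult.commute)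
      then show ?thesis
        using fermat by simp
    qed
    moreover have "Q \<noteq> 0"
      unfolding Q_def using qdl_factor_nonzero by simp
    ultimately have "y * qdl N x y z (n - 1) = z - x"
      by (metis nonzero_mult_div_cancel_left)
    then show ?thesis
      using omg_n 0 n_mod by (simp add: qdl_def)
  qed
qed

lemma fermat_point_div_omg: "fermat_point N (x / omg N) y z"
  using N_pos y_nonzero fermat by unfold_locales (simp_all add: power_divide)

lemma qdl_div_omg_functional_equation:
  "y * qdl N (x / omg N) y z (n - 1) = (z - x * omg N powi (n - 1)) * qdl N (x / omg N) y z n"
  using fermat_point.qdl_functional_equation[OF fermat_point_div_omg, of n] by (simp add: omg_powi_diff)

lemma qdl_div_omg_nonzero: "qdl N (x / omg N) y z n \<noteq> 0"
  by (rule fermat_point.qdl_nonzero[OF fermat_point_div_omg])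

lemma qdl_ratio_rec:
  "qdl_ratio N x y z d m * (z - x * omg N powi m)
    = qdl_ratio N x y z d (m - 1) * (z - x * omg N powi (m + d - 1))"
proof -
  let ?b = "qdl N (x / omg N) y z (m + d)" and ?b' = "qdl N (x / omg N) y z (m - 1 + d)"
  have "y * ?b' = (z - x * omg N powi (m + d - 1)) * ?b"
    using qdl_div_omg_functional_equation[of "m + d"] by (simp add: algebra_simps)
  then have factor: "z - x * omg N powi (m + d - 1) = y * ?b' / ?b"
    using qdl_div_omg_nonzero[of "m + d"] by (simp add: field_simps)
  have "qdl_ratio N x y z d m * (z - x * omg N powi m) = qdl N x y z m * (z - x * omg N powi m) / ?b"
    by (simp add: qdl_ratio_def)
  also have "\<dots> = y * qdl N x y z (m - 1) / ?b"
    by (simp only: qdl_functional_equation[of m] mult.commute)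
  also have "\<dots> = qdl N x y z (m - 1) / ?b' * (y * ?b' / ?b)"
    using qdl_div_omg_nonzero[of "m - 1 + d"] by simp
  finally show ?thesis
    by (simp only: factor qdl_ratio_def)
qed

lemma qdl_ratio_sum_eq_0:
  assumes z: "z \<noteq> 0" and d: "d mod int N \<noteq> 0"
  shows "qdl_ratio_sum N x y z d = 0"
proof -
  define f where "f m = omg N powi (- (m * d)) * qdl_ratio N x y z d m" for m
  define g where "g m = omg N powi m * f m" for m
  have f_mod: "f (m mod int N) = f m" and g_mod: "g (m mod int N) = g m" for m
    by (simp_all only: f_def g_def qdl_ratio_twisted_mod omg_powi_mod)
  have step: "z * f m - x * g m = omg N powi (- d) * z * f (m - 1) - x * g (m - 1)" for m
  proof -
    have twist: "omg N powi (- (m * d)) = omg N powi (- d) * omg N powi (- ((m - 1) * d))"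
      by (simp flip: omg_powi_add add: algebra_simps)
    have shift: "omg N powi (- d) * omg N powi (m + d - 1) = omg N powi (m - 1)"
      by (simp flip: omg_powi_add)
    have "z * f m - x * g m = omg N powi (- (m * d)) * (qdl_ratio N x y z d m * (z - x * omg N powi m))"
      by (simp add: f_def g_def algebra_simps)
    also have "\<dots> = omg N powi (- (m * d)) * (qdl_ratio N x y z d (m - 1) * (z - x * omg N powi (m + d - 1)))"
      by (simp only: qdl_ratio_rec)
    also have "\<dots> = omg N powi (- d) * f (m - 1) * (z - x * omg N powi (m + d - 1))"
      by (simp add: twist f_def)
    also have "\<dots> = omg N powi (- d) * z * f (m - 1) - x * (omg N powi (- d) * omg N powi (m + d - 1)) * f (m - 1)"
      by (simp add: algebra_simps)
    finally show ?thesis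
      by (simp only: shift g_def mult.assoc)
  qed
  define S where "S = (\<Sum>k\<in>{0..<N}. f (int k))"
  define U where "U = (\<Sum>k\<in>{0..<N}. g (int k))"
  have "z * S - x * U = (\<Sum>k\<in>{0..<N}. z * f (int k) - x * g (int k))"
    by (simp add: S_def U_def sum_subtractf sum_distrib_left)
  also have "\<dots> = (\<Sum>k\<in>{0..<N}. omg N powi (- d) * z * f (int k + - 1) - x * g (int k + - 1))"
    by (simp add: step)
  also have "\<dots> = (\<Sum>k\<in>{0..<N}. omg N powi (- d) * z * f (int k) - x * g (int k))"
    by (rule sum_periodic_shift[OF N_pos, where f = "\<lambda>m. omg N powi (- d) * z * f m - x * g m"])
      (simp add: f_mod g_mod)
  also have "\<dots> = omg N powi (- d) * z * S - x * U"
    by (simp add: S_def U_def sum_subtractf sum_distrib_left)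
  finally have "(1 - omg N powi (- d)) * z * S = 0"
    by (simp add: algebra_simps)
  moreover have "omg N powi (- d) \<noteq> 1"
  proof -
    have "d mod int N < int N"
      using N_pos by simp
    then show ?thesis
      using d omg_powi_eq_1_iff[OF N_pos, of "- d"] by (auto simp: zmod_zminus1_eq_if)
  qed
  ultimately have "S = 0"
    using z by simp
  then show ?thesis
    by (simp add: S_def f_def qdl_ratio_sum_def)
qed

lemma qdl_ratio_sum_0:
  assumes z: "z \<noteq> 0"
  shows "qbr N (x / z) * qdl_ratio_sum N x y z 0 = 1"
proof -
  have ratio: "qdl_ratio N x y z 0 (int k) * (z - x * omg N ^ k) = z - x" for k
  proof (induction k)
    case (Suc k)
    then show ?case
      using qdl_ratio_rec[of 0 "int (Suc k)"] by (simp add: omg_powi_add)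
  qed (simp add: qdl_ratio_def)
  have "z \<noteq> x"
    using z_pow_ne_x_pow by auto
  have "qdl_ratio_sum N x y z 0 = (z - x) * (\<Sum>k\<in>{0..<N}. 1 / (z - x * omg N ^ k))"
    unfolding qdl_ratio_sum_def sum_distrib_left
    using ratio qdl_factor_nonzero by (intro sum.cong) (simp_all add: field_simps)
  also have "\<dots> = (z - x) * of_nat N * z ^ (N - 1) / (z ^ N - x ^ N)"
    by (simp add: sum_inverse_shifted_roots_of_unity[OF N_pos z_pow_ne_x_pow])
  moreover have "qbr N (x / z) = (z ^ N - x ^ N) / (of_nat N * z ^ (N - 1) * (z - x))"
  proof -
    have "z ^ N = z * z ^ (N - 1)"
      using N_pos by (simp flip: power_Suc)
    then show ?thesis
      using z \<open>z \<noteq> x\<close> by (simp add: qbr_def divide_simps)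
  qed
  ultimately show ?thesis
    using z N_pos \<open>z \<noteq> x\<close> z_pow_ne_x_pow by simp
qed

lemma qdl_ratio_sum_orthogonality:
  assumes "z \<noteq> 0"
  shows "qbr N (x / z) * qdl_ratio_sum N x y z d = dlt N d"
proof (cases "d mod int N = 0")
  case True
  then show ?thesis
    using qdl_ratio_sum_0[OF assms] qdl_ratio_sum_cong[of d N 0] by (simp add: dlt_def)
qed (simp add: dlt_def qdl_ratio_sum_eq_0[OF assms])

end

section \<open>Intertwiners and dual bases\<close>

lemma mcomp_assoc:
  assumes "finite J" "finite K"
  shows "mcomp K (mcomp J A B) C = mcomp J A (mcomp K B C)"
  unfolding mcomp_def
  by (intro ext) (simp add: sum_distrib_left sum_distrib_right mult.assoc sum.swap[of _ K])

lemma mcomp_cong_left: "meq I J A A' \<Longrightarrow> x \<in> I \<Longrightarrow> mcomp J A B x z = mcomp J A' B x z"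
  unfolding mcomp_def meq_def by (rule sum.cong) auto

lemma mcomp_cong_right: "meq J K B B' \<Longrightarrow> z \<in> K \<Longrightarrow> mcomp J A B x z = mcomp J A B' x z"
  unfolding mcomp_def meq_def by (rule sum.cong) auto

lemma mcomp_lincomb_left:
  "mcomp J (\<lambda>x y. \<Sum>\<alpha><n. c \<alpha> * A \<alpha> x y) B x z = (\<Sum>\<alpha><n. c \<alpha> * mcomp J (A \<alpha>) B x z)"
  unfolding mcomp_def by (simp add: sum_distrib_left sum_distrib_right mult.assoc sum.swap[of _ J])

lemma mcomp_lincomb_right:
  "mcomp J A (\<lambda>x y. \<Sum>\<alpha><n. c \<alpha> * B \<alpha> x y) x z = (\<Sum>\<alpha><n. c \<alpha> * mcomp J A (B \<alpha>) x z)"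
  unfolding mcomp_def by (simp add: sum_distrib_left mult.left_commute sum.swap[of _ J])

lemma mcomp_sum_left:
  "mcomp J (\<lambda>x y. \<Sum>\<alpha><n. A \<alpha> x y) B x z = (\<Sum>\<alpha><n. mcomp J (A \<alpha>) B x z)"
  unfolding mcomp_def by (simp add: sum_distrib_right sum.swap[of _ J])

lemma mcomp_sum_right:
  "mcomp J A (\<lambda>x y. \<Sum>\<alpha><n. B \<alpha> x y) x z = (\<Sum>\<alpha><n. mcomp J A (B \<alpha>) x z)"
  unfolding mcomp_def by (simp add: sum_distrib_left sum.swap[of _ J])

lemma mcomp_add_left:
  "mcomp J (\<lambda>x y. A x y + B x y) M x z = mcomp J A M x z + mcomp J B M x z"
  by (simp add: mcomp_def distrib_right sum.distrib)

lemma mcomp_add_right: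
  "mcomp J M (\<lambda>x y. A x y + B x y) x z = mcomp J M A x z + mcomp J M B x z"
  by (simp add: mcomp_def distrib_left sum.distrib)

lemma mcomp_tens_left:
  "mcomp (I \<times> J) (tens A B) M (i, j) q = (\<Sum>i'\<in>I. A i i' * (\<Sum>j'\<in>J. B j j' * M (i', j') q))"
  by (simp add: mcomp_def tens_def sum.cartesian_product' sum_distrib_left mult.assoc)

lemma mcomp_tens_right:
  "mcomp (I \<times> J) M (tens A B) q (i, j) = (\<Sum>i'\<in>I. (\<Sum>j'\<in>J. M q (i', j') * B j' j) * A i' i)"
  by (simp add: mcomp_def tens_def sum.cartesian_product' sum_distrib_left sum_distrib_right mult_ac)

lemma tens_mid: "tens mid mid = mid"
  by (intro ext) (auto simp: tens_def mid_def split: if_splits)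

lemma mcomp_scaled_mid_left:
  assumes "finite J" "x \<in> J"
  shows "mcomp J (\<lambda>x y. c * mid x y) B x z = c * B x z"
proof -
  have "mcomp J (\<lambda>x y. c * mid x y) B x z = (\<Sum>y\<in>J. if x = y then c * B y z else 0)"
    unfolding mcomp_def mid_def by (intro sum.cong) auto
  then show ?thesis
    using assms by simp
qed

lemma mcomp_scaled_mid_right:
  assumes "finite J" "z \<in> J"
  shows "mcomp J A (\<lambda>x y. c * mid x y) x z = c * A x z"
proof -
  have "mcomp J A (\<lambda>x y. c * mid x y) x z = (\<Sum>y\<in>J. if y = z then c * A x y else 0)"
    unfolding mcomp_def mid_def by (intro sum.cong) auto
  then show ?thesis
    using assms by simp
qed

lemma mcomp_commute_trans:
  assumes "finite I" "finite J" "finite K"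
    and T: "meq J I (mcomp J B T) (mcomp I T A)"
    and T': "meq K J (mcomp K C T') (mcomp J T' B)"
  shows "meq K I (mcomp K C (mcomp J T' T)) (mcomp I (mcomp J T' T) A)"
  unfolding meq_def
proof (intro ballI)
  fix x z assume "x \<in> K" "z \<in> I"
  have "mcomp K C (mcomp J T' T) x z = mcomp J (mcomp K C T') T x z"
    using assms(2,3) by (simp add: mcomp_assoc)
  also have "\<dots> = mcomp J (mcomp J T' B) T x z"
    by (rule mcomp_cong_left[OF T' \<open>x \<in> K\<close>])
  also have "\<dots> = mcomp J T' (mcomp J B T) x z"
    using assms(2) by (simp add: mcomp_assoc)
  also have "\<dots> = mcomp J T' (mcomp I T A) x z"
    by (rule mcomp_cong_right[OF T \<open>z \<in> I\<close>])
  also have "\<dots> = mcomp I (mcomp J T' T) A x z"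
    using assms(1,2) by (simp add: mcomp_assoc)
  finally show "mcomp K C (mcomp J T' T) x z = mcomp I (mcomp J T' T) A x z" .
qed

lemma is_hom_mcomp:
  assumes "finite I" "finite J" "finite K" "is_hom I R J S T" "is_hom J S K U T'"
  shows "is_hom I R K U (mcomp J T' T)"
  using assms unfolding is_hom_def by (auto intro: mcomp_commute_trans)

context
  fixes N :: nat and I :: "'a set" and J :: "'b set" and base :: 'a
    and K :: "nat \<Rightarrow> ('b, 'a) mat" and Kb :: "nat \<Rightarrow> ('a, 'b) mat"
  assumes base: "base \<in> I"
    and dual: "\<And>\<alpha> \<beta>. \<alpha> < N \<Longrightarrow> \<beta> < N \<Longrightarrow>
        meq I I (mcomp J (Kb \<alpha>) (K \<beta>)) (\<lambda>x y. dlt N (int \<alpha> - int \<beta>) * mid x y)"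
begin

lemma dual_at_base_point:
  "\<alpha> < N \<Longrightarrow> \<beta> < N \<Longrightarrow> mcomp J (Kb \<alpha>) (K \<beta>) base base = (if \<alpha> = \<beta> then 1 else 0)"
  using dual base by (simp add: meq_def mid_def dlt_of_nat_diff)

lemma lincomb_coeff_left:
  "\<beta> < N \<Longrightarrow> mcomp J (Kb \<beta>) (\<lambda>x y. \<Sum>\<alpha><N. c \<alpha> * K \<alpha> x y) base base = c \<beta>"
  by (simp add: mcomp_lincomb_right dual_at_base_point if_distrib cong: if_cong)

lemma lincomb_coeff_right:
  "\<beta> < N \<Longrightarrow> mcomp J (\<lambda>x y. \<Sum>\<alpha><N. c \<alpha> * Kb \<alpha> x y) (K \<beta>) base base = c \<beta>"
  by (simp add: mcomp_lincomb_left dual_at_base_point if_distrib cong: if_cong)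

lemma lincomb_independent_left:
  assumes "meq J I (\<lambda>x y. \<Sum>\<alpha><N. c \<alpha> * K \<alpha> x y) (\<lambda>_ _. 0)"
  shows "\<forall>\<beta><N. c \<beta> = 0"
proof (intro allI impI)
  fix \<beta> assume "\<beta> < N"
  then have "c \<beta> = mcomp J (Kb \<beta>) (\<lambda>x y. \<Sum>\<alpha><N. c \<alpha> * K \<alpha> x y) base base"
    by (simp add: lincomb_coeff_left)
  also have "\<dots> = mcomp J (Kb \<beta>) (\<lambda>_ _. 0) base base"
    by (rule mcomp_cong_right[OF assms base])
  finally show "c \<beta> = 0"
    by (simp add: mcomp_def)
qed

lemma lincomb_independent_right:
  assumes "meq I J (\<lambda>x y. \<Sum>\<alpha><N. c \<alpha> * Kb \<alpha> x y) (\<lambda>_ _. 0)"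
  shows "\<forall>\<beta><N. c \<beta> = 0"
proof (intro allI impI)
  fix \<beta> assume "\<beta> < N"
  then have "c \<beta> = mcomp J (\<lambda>x y. \<Sum>\<alpha><N. c \<alpha> * Kb \<alpha> x y) (K \<beta>) base base"
    by (simp add: lincomb_coeff_right)
  also have "\<dots> = mcomp J (\<lambda>_ _. 0) (K \<beta>) base base"
    by (rule mcomp_cong_left[OF assms base])
  finally show "c \<beta> = 0"
    by (simp add: mcomp_def)
qed

end

context
  fixes N :: nat and I :: "'a set" and J :: "'b set" and base :: 'a and R S
    and K :: "nat \<Rightarrow> ('b, 'a) mat" and Kb :: "nat \<Rightarrow> ('a, 'b) mat"
  assumes fin: "finite I" "finite J" and base: "base \<in> I"
    and hom_K: "\<And>\<alpha>. \<alpha> < N \<Longrightarrow> is_hom I R J S (K \<alpha>)"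
    and hom_Kb: "\<And>\<alpha>. \<alpha> < N \<Longrightarrow> is_hom J S I R (Kb \<alpha>)"
    and complete: "meq J J (\<lambda>x y. \<Sum>\<alpha><N. mcomp I (K \<alpha>) (Kb \<alpha>) x y) mid"
    and schur: "\<And>M. is_hom I R I R M \<Longrightarrow> meq I I M (\<lambda>x y. M base base * mid x y)"
begin

lemma hom_in_span_left:
  assumes T: "is_hom I R J S T"
  shows "\<exists>c. meq J I T (\<lambda>x y. \<Sum>\<alpha><N. c \<alpha> * K \<alpha> x y)"
proof (intro exI[of _ "\<lambda>\<alpha>. mcomp J (Kb \<alpha>) T base base"], unfold meq_def, intro ballI)
  fix x z assume "x \<in> J" "z \<in> I"
  have scalar: "meq I I (mcomp J (Kb \<alpha>) T) (\<lambda>x y. mcomp J (Kb \<alpha>) T base base * mid x y)" if "\<alpha> < N" for \<alpha>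
    using fin by (intro schur is_hom_mcomp[OF _ _ _ T hom_Kb[OF that]])
  have "T x z = mcomp J mid T x z"
    using mcomp_scaled_mid_left[OF fin(2) \<open>x \<in> J\<close>, of 1 T z] by simp
  also have "\<dots> = mcomp J (\<lambda>x y. \<Sum>\<alpha><N. mcomp I (K \<alpha>) (Kb \<alpha>) x y) T x z"
    by (rule mcomp_cong_left[OF complete \<open>x \<in> J\<close>, symmetric])
  also have "\<dots> = (\<Sum>\<alpha><N. mcomp I (K \<alpha>) (mcomp J (Kb \<alpha>) T) x z)"
    using fin by (simp add: mcomp_sum_left mcomp_assoc)
  also have "\<dots> = (\<Sum>\<alpha><N. mcomp J (Kb \<alpha>) T base base * K \<alpha> x z)"
    using fin \<open>z \<in> I\<close> by (intro sum.cong refl) (simp add: mcomp_cong_right[OF scalar] mcomp_scaled_mid_right)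
  finally show "T x z = (\<Sum>\<alpha><N. mcomp J (Kb \<alpha>) T base base * K \<alpha> x z)" .
qed

lemma hom_in_span_right:
  assumes T: "is_hom J S I R T"
  shows "\<exists>c. meq I J T (\<lambda>x y. \<Sum>\<alpha><N. c \<alpha> * Kb \<alpha> x y)"
proof (intro exI[of _ "\<lambda>\<alpha>. mcomp J T (K \<alpha>) base base"], unfold meq_def, intro ballI)
  fix x z assume "x \<in> I" "z \<in> J"
  have scalar: "meq I I (mcomp J T (K \<alpha>)) (\<lambda>x y. mcomp J T (K \<alpha>) base base * mid x y)" if "\<alpha> < N" for \<alpha>
    using fin by (intro schur is_hom_mcomp[OF _ _ _ hom_K[OF that] T])
  have "T x z = mcomp J T mid x z"
    using mcomp_scaled_mid_right[OF fin(2) \<open>z \<in> J\<close>, of T 1] by simp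
  also have "\<dots> = mcomp J T (\<lambda>x y. \<Sum>\<alpha><N. mcomp I (K \<alpha>) (Kb \<alpha>) x y) x z"
    by (rule mcomp_cong_right[OF complete \<open>z \<in> J\<close>, symmetric])
  also have "\<dots> = (\<Sum>\<alpha><N. mcomp I (mcomp J T (K \<alpha>)) (Kb \<alpha>) x z)"
    using fin by (simp add: mcomp_sum_right mcomp_assoc)
  also have "\<dots> = (\<Sum>\<alpha><N. mcomp J T (K \<alpha>) base base * Kb \<alpha> x z)"
    using fin \<open>x \<in> I\<close> by (intro sum.cong refl) (simp add: mcomp_cong_left[OF scalar] mcomp_scaled_mid_left)
  finally show "T x z = (\<Sum>\<alpha><N. mcomp J T (K \<alpha>) base base * Kb \<alpha> x z)" .
qed

end

lemma is_hom_basis_if_dual: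
  assumes "finite I" "finite J" "base \<in> I"
    and "\<And>\<alpha>. \<alpha> < N \<Longrightarrow> is_hom I R J S (K \<alpha>)"
    and "\<And>\<alpha>. \<alpha> < N \<Longrightarrow> is_hom J S I R (Kb \<alpha>)"
    and "\<And>\<alpha> \<beta>. \<alpha> < N \<Longrightarrow> \<beta> < N \<Longrightarrow>
        meq I I (mcomp J (Kb \<alpha>) (K \<beta>)) (\<lambda>x y. dlt N (int \<alpha> - int \<beta>) * mid x y)"
    and "meq J J (\<lambda>x y. \<Sum>\<alpha><N. mcomp I (K \<alpha>) (Kb \<alpha>) x y) mid"
    and "\<And>M. is_hom I R I R M \<Longrightarrow> meq I I M (\<lambda>x y. M base base * mid x y)"
  shows "is_hom_basis N I R J S K \<and> is_hom_basis N J S I R Kb"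
  using assms lincomb_independent_left[of base I N J Kb K] lincomb_independent_right[of base I N J Kb K]
    hom_in_span_left[of I J base N R S K Kb] hom_in_span_right[of I J base N R S K Kb]
  unfolding is_hom_basis_def by blast

section \<open>The standard representation and antidiagonal intertwiners\<close>

definition zdiag :: "nat \<Rightarrow> complex \<Rightarrow> complex \<Rightarrow> (nat, nat) mat" where
  "zdiag N c q = (\<lambda>i j. c * (q ^ i * dlt N (int i - int j)))"

lemma rE_stdrep: "rE (stdrep N a y) = zdiag N (a ^ 2) (omg N)"
  by (simp add: stdrep_def zdiag_def)

lemma rEi_stdrep: "rEi (stdrep N a y) = zdiag N (inverse a ^ 2) (inverse (omg N))"
  by (simp add: stdrep_def zdiag_def)

lemma sum_zdiag_left:
  assumes "i < N"
  shows "(\<Sum>k\<in>{0..<N}. zdiag N c q i k * f k) = c * q ^ i * f i"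
proof -
  have "(\<Sum>k\<in>{0..<N}. zdiag N c q i k * f k) = (\<Sum>k\<in>{0..<N}. if k = i then c * q ^ i * f i else 0)"
    using assms by (intro sum.cong) (auto simp: zdiag_def dlt_of_nat_diff)
  then show ?thesis
    using assms by simp
qed

lemma sum_zdiag_right:
  assumes "j < N"
  shows "(\<Sum>k\<in>{0..<N}. f k * zdiag N c q k j) = f j * (c * q ^ j)"
proof -
  have "(\<Sum>k\<in>{0..<N}. f k * zdiag N c q k j) = (\<Sum>k\<in>{0..<N}. if k = j then f j * (c * q ^ j) else 0)"
    using assms by (intro sum.cong) (auto simp: zdiag_def dlt_of_nat_diff)
  then show ?thesis
    using assms by simp
qed

lemma sum_mid_left:
  assumes "j < (N :: nat)"
  shows "(\<Sum>k\<in>{0..<N}. mid j k * f k) = (f j :: complex)"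
proof -
  have "(\<Sum>k\<in>{0..<N}. mid j k * f k) = (\<Sum>k\<in>{0..<N}. if k = j then f j else 0)"
    by (intro sum.cong) (auto simp: mid_def)
  then show ?thesis
    using assms by simp
qed

lemma sum_mid_right:
  assumes "j < (N :: nat)"
  shows "(\<Sum>k\<in>{0..<N}. f k * mid k j) = (f j :: complex)"
proof -
  have "(\<Sum>k\<in>{0..<N}. f k * mid k j) = (\<Sum>k\<in>{0..<N}. if k = j then f j else 0)"
    by (intro sum.cong) (auto simp: mid_def)
  then show ?thesis
    using assms by simp
qed

lemma sum_rD_stdrep_left:
  assumes "N > 0"
  shows "(\<Sum>k\<in>{0..<N}. rD (stdrep N a y) i k * f k) = a * y * f (nat ((int i - 1) mod int N))"
proof -
  have "dlt N (int i - int k - 1) = dlt N (int k - (int i - 1))" for k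
    using dlt_uminus[of N "int k - (int i - 1)"] by (simp add: algebra_simps)
  then show ?thesis
    using sum_dlt[OF assms, of "\<lambda>k. a * y * f k" "int i - 1"] by (simp add: stdrep_def mult_ac)
qed

lemma sum_rD_stdrep_right:
  assumes "N > 0"
  shows "(\<Sum>k\<in>{0..<N}. f k * rD (stdrep N a y) k j) = f (nat ((int j + 1) mod int N)) * (a * y)"
  using sum_dlt[OF assms, of "\<lambda>k. f k * (a * y)" "int j + 1"] by (simp add: stdrep_def mult_ac diff_diff_eq)

lemma stdrep_endomorphism_scalar:
  assumes "N > 0" "a \<noteq> 0" "y \<noteq> 0"
    and M: "is_hom (Vidx N) (stdrep N a y) (Vidx N) (stdrep N a y) M"
  shows "meq (Vidx N) (Vidx N) M (\<lambda>i j. M 0 0 * mid i j)"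
proof -
  \<comment> \<open>\<open>E\<close> has the distinct eigenvalues \<open>a\<^sup>2 \<omega>\<^sup>i\<close>, so \<open>M\<close> is diagonal; \<open>D\<close> permutes the
    basis cyclically, so the diagonal is constant.\<close>
  have E: "a ^ 2 * omg N ^ i * M i j = M i j * (a ^ 2 * omg N ^ j)" if "i < N" "j < N" for i j
  proof -
    have "mcomp (Vidx N) (rE (stdrep N a y)) M i j = mcomp (Vidx N) M (rE (stdrep N a y)) i j"
      using M that by (simp add: is_hom_def meq_def Vidx_def)
    then show ?thesis
      by (simp only: mcomp_def Vidx_def rE_stdrep sum_zdiag_left[OF that(1)] sum_zdiag_right[OF that(2)])
  qed
  have D: "a * y * M (nat ((int i - 1) mod int N)) j = M i (nat ((int j + 1) mod int N)) * (a * y)"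
    if "i < N" "j < N" for i j
  proof -
    have "mcomp (Vidx N) (rD (stdrep N a y)) M i j = mcomp (Vidx N) M (rD (stdrep N a y)) i j"
      using M that by (simp add: is_hom_def meq_def Vidx_def)
    then show ?thesis
      by (simp only: mcomp_def Vidx_def sum_rD_stdrep_left[OF assms(1)] sum_rD_stdrep_right[OF assms(1)])
  qed
  have off_diagonal: "M i j = 0" if "i < N" "j < N" "i \<noteq> j" for i j
  proof -
    have "a ^ 2 * (omg N ^ i - omg N ^ j) * M i j = 0"
      using E[OF that(1,2)] by (simp add: algebra_simps)
    moreover have "omg N ^ i - omg N ^ j \<noteq> 0"
      using omg_pow_inj[OF that(1,2)] that(3) by auto
    ultimately show ?thesis
      using assms(2) by simp
  qed
  have diagonal_step: "M (Suc j) (Suc j) = M j j" if "Suc j < N" for j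
  proof -
    have "nat ((int (Suc j) - 1) mod int N) = j" and "nat ((int j + 1) mod int N) = Suc j"
      using that by simp_all
    then have "a * y * M j j = M (Suc j) (Suc j) * (a * y)"
      using D[OF that Suc_lessD[OF that]] by (simp only:)
    then show ?thesis
      using assms(2,3) by simp
  qed
  have diagonal: "M j j = M 0 0" if "j < N" for j
    using that
  proof (induction j)
    case (Suc j)
    then show ?case
      using diagonal_step[OF Suc.prems] Suc.IH[OF Suc_lessD[OF Suc.prems]] by simp
  qed simp
  show ?thesis
    unfolding meq_def Vidx_def
  proof (intro ballI)
    fix i j assume "i \<in> {0..<N}" "j \<in> {0..<N}"
    then show "M i j = M 0 0 * mid i j"
      using diagonal[of i] off_diagonal[of i j] by (cases "i = j") (simp_all add: mid_def)
  qed
qed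

text \<open>Coefficient functions live on \<open>\<int> \<times> \<int>\<close> so that index shifts such as
  \<open>i - 1\<close> need no reduction; \<open>doubly_periodic\<close> makes them functions on \<open>(\<int>/N)\<^sup>2\<close>.\<close>

definition doubly_periodic :: "nat \<Rightarrow> (int \<Rightarrow> int \<Rightarrow> complex) \<Rightarrow> bool" where
  "doubly_periodic N F \<longleftrightarrow> (\<forall>i j. F (i mod int N) j = F i j \<and> F i (j mod int N) = F i j)"

definition antidiag_map :: "nat \<Rightarrow> (int \<Rightarrow> int \<Rightarrow> complex) \<Rightarrow> (nat \<times> nat, nat) mat" where
  "antidiag_map N F = (\<lambda>(i, j) k. F (int i) (int j) * dlt N (int i + int j - int k))"

definition antidiag_comap :: "nat \<Rightarrow> (int \<Rightarrow> int \<Rightarrow> complex) \<Rightarrow> (nat, nat \<times> nat) mat" where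
  "antidiag_comap N G = (\<lambda>k (i, j). G (int i) (int j) * dlt N (int i + int j - int k))"

lemma antidiag_map_mod:
  assumes "N > 0" "doubly_periodic N F"
  shows "antidiag_map N F (nat (a mod int N), nat (b mod int N)) (nat (c mod int N)) = F a b * dlt N (a + b - c)"
  using assms by (simp add: antidiag_map_def doubly_periodic_def dlt_add_diff_mod)

lemma antidiag_comap_mod:
  assumes "N > 0" "doubly_periodic N G"
  shows "antidiag_comap N G (nat (c mod int N)) (nat (a mod int N), nat (b mod int N)) = G a b * dlt N (a + b - c)"
  using assms by (simp add: antidiag_comap_def doubly_periodic_def dlt_add_diff_mod)

lemma pow_eq_if_dlt_nonzero:
  fixes q :: "'a :: comm_monoid_mult"
  assumes "q ^ N = 1" and "dlt N (int i + int j - int k) \<noteq> 0"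
  shows "q ^ i * q ^ j = q ^ k"
proof -
  have "int (i + j) mod int N = int k mod int N"
    using assms(2) dlt_diff[of N "int i + int j" "int k"] by (auto split: if_splits)
  then have "(i + j) mod N = k mod N"
    by (simp only: zmod_int[symmetric] of_nat_eq_iff)
  then show ?thesis
    using power_mod_eq_if_power_eq_1[OF assms(1), of "i + j"] power_mod_eq_if_power_eq_1[OF assms(1), of k]
    by (simp add: power_add)
qed

lemma antidiag_map_commutes_zdiag:
  assumes "q ^ N = 1"
  shows "meq (Vidx N \<times> Vidx N) (Vidx N)
    (mcomp (Vidx N \<times> Vidx N) (tens (zdiag N c1 q) (zdiag N c2 q)) (antidiag_map N F))
    (mcomp (Vidx N) (antidiag_map N F) (zdiag N (c1 * c2) q))"
  unfolding meq_def
proof (intro ballI, clarify)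
  fix i j k assume "i \<in> Vidx N" "j \<in> Vidx N" "k \<in> Vidx N"
  then have "i < N" "j < N" "k < N"
    by (simp_all add: Vidx_def)
  let ?K = "antidiag_map N F (i, j) k"
  have "mcomp (Vidx N \<times> Vidx N) (tens (zdiag N c1 q) (zdiag N c2 q)) (antidiag_map N F) (i, j) k
      = c1 * q ^ i * (c2 * q ^ j * ?K)"
    by (simp add: mcomp_tens_left Vidx_def sum_zdiag_left \<open>i < N\<close> \<open>j < N\<close>)
  moreover have "mcomp (Vidx N) (antidiag_map N F) (zdiag N (c1 * c2) q) (i, j) k = ?K * (c1 * c2 * q ^ k)"
    by (simp add: mcomp_def Vidx_def sum_zdiag_right \<open>k < N\<close>)
  moreover have "q ^ k = q ^ i * q ^ j" if "?K \<noteq> 0"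
    using that pow_eq_if_dlt_nonzero[OF assms, of i j k] by (auto simp: antidiag_map_def)
  ultimately show "mcomp (Vidx N \<times> Vidx N) (tens (zdiag N c1 q) (zdiag N c2 q)) (antidiag_map N F) (i, j) k
      = mcomp (Vidx N) (antidiag_map N F) (zdiag N (c1 * c2) q) (i, j) k"
    by (cases "?K = 0") (simp_all add: mult_ac)
qed

lemma antidiag_comap_commutes_zdiag:
  assumes "q ^ N = 1"
  shows "meq (Vidx N) (Vidx N \<times> Vidx N)
    (mcomp (Vidx N) (zdiag N (c1 * c2) q) (antidiag_comap N G))
    (mcomp (Vidx N \<times> Vidx N) (antidiag_comap N G) (tens (zdiag N c1 q) (zdiag N c2 q)))"
  unfolding meq_def
proof (intro ballI, clarify)
  fix i j k assume "i \<in> Vidx N" "j \<in> Vidx N" "k \<in> Vidx N"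
  then have "i < N" "j < N" "k < N"
    by (simp_all add: Vidx_def)
  let ?K = "antidiag_comap N G k (i, j)"
  have "mcomp (Vidx N \<times> Vidx N) (antidiag_comap N G) (tens (zdiag N c1 q) (zdiag N c2 q)) k (i, j)
      = ?K * (c2 * q ^ j) * (c1 * q ^ i)"
    by (simp add: mcomp_tens_right Vidx_def sum_zdiag_right \<open>i < N\<close> \<open>j < N\<close>)
  moreover have "mcomp (Vidx N) (zdiag N (c1 * c2) q) (antidiag_comap N G) k (i, j) = c1 * c2 * q ^ k * ?K"
    by (simp add: mcomp_def Vidx_def sum_zdiag_left \<open>k < N\<close>)
  moreover have "q ^ k = q ^ i * q ^ j" if "?K \<noteq> 0"
    using that pow_eq_if_dlt_nonzero[OF assms, of i j k] by (auto simp: antidiag_comap_def)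
  ultimately show "mcomp (Vidx N) (zdiag N (c1 * c2) q) (antidiag_comap N G) k (i, j)
      = mcomp (Vidx N \<times> Vidx N) (antidiag_comap N G) (tens (zdiag N c1 q) (zdiag N c2 q)) k (i, j)"
    by (cases "?K = 0") (simp_all add: mult_ac)
qed

lemma antidiag_map_commutes_rD:
  assumes N: "N > 0" and per: "doubly_periodic N F"
    and rec: "\<And>i j. a1 ^ 2 * a2 * b2 * omg N powi i * F i (j - 1) + a1 * b1 * F (i - 1) j
      = a1 * a2 * b3 * F i j"
  shows "meq (Vidx N \<times> Vidx N) (Vidx N)
    (mcomp (Vidx N \<times> Vidx N) (rD (tensrep (stdrep N a1 b1) (stdrep N a2 b2))) (antidiag_map N F))
    (mcomp (Vidx N) (antidiag_map N F) (rD (stdrep N (a1 * a2) b3)))"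
  unfolding meq_def
proof (intro ballI, clarify)
  fix i j k assume "i \<in> Vidx N" "j \<in> Vidx N" "k \<in> Vidx N"
  then have ijk: "i < N" "j < N" "k < N"
    by (simp_all add: Vidx_def)
  let ?K = "antidiag_map N F" and ?e = "dlt N (int i + int j - int k - 1)"
  have K_at: "?K (nat (a mod int N), nat (b mod int N)) (nat (c mod int N)) = F a b * dlt N (a + b - c)" for a b c
    by (rule antidiag_map_mod[OF N per])
  have "mcomp (Vidx N \<times> Vidx N) (rD (tensrep (stdrep N a1 b1) (stdrep N a2 b2))) ?K (i, j) k
      = a1 ^ 2 * omg N ^ i * (a2 * b2 * ?K (i, nat ((int j - 1) mod int N)) k)
        + a1 * b1 * ?K (nat ((int i - 1) mod int N), j) k"
    using ijk N by (simp add: tensrep_def mcomp_add_left mcomp_tens_left Vidx_def rE_stdrep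
        sum_zdiag_left sum_rD_stdrep_left sum_mid_left)
  also have "\<dots> = (a1 ^ 2 * a2 * b2 * omg N powi int i * F (int i) (int j - 1) + a1 * b1 * F (int i - 1) (int j)) * ?e"
    using K_at[of "int i" "int j - 1" "int k"] K_at[of "int i - 1" "int j" "int k"] ijk
    by (simp add: algebra_simps)
  also have "\<dots> = a1 * a2 * b3 * F (int i) (int j) * ?e"
    by (simp only: rec)
  also have "\<dots> = mcomp (Vidx N) ?K (rD (stdrep N (a1 * a2) b3)) (i, j) k"
    using K_at[of "int i" "int j" "int k + 1"] ijk N by (simp add: mcomp_def Vidx_def sum_rD_stdrep_right algebra_simps)
  finally show "mcomp (Vidx N \<times> Vidx N) (rD (tensrep (stdrep N a1 b1) (stdrep N a2 b2))) ?K (i, j) k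
      = mcomp (Vidx N) ?K (rD (stdrep N (a1 * a2) b3)) (i, j) k" .
qed

lemma antidiag_comap_commutes_rD:
  assumes N: "N > 0" and per: "doubly_periodic N G"
    and rec: "\<And>i j. a1 * a2 * b3 * G i j
      = a1 ^ 2 * a2 * b2 * omg N powi i * G i (j + 1) + a1 * b1 * G (i + 1) j"
  shows "meq (Vidx N) (Vidx N \<times> Vidx N)
    (mcomp (Vidx N) (rD (stdrep N (a1 * a2) b3)) (antidiag_comap N G))
    (mcomp (Vidx N \<times> Vidx N) (antidiag_comap N G) (rD (tensrep (stdrep N a1 b1) (stdrep N a2 b2))))"
  unfolding meq_def
proof (intro ballI, clarify)
  fix k i j assume "k \<in> Vidx N" "i \<in> Vidx N" "j \<in> Vidx N"
  then have ijk: "i < N" "j < N" "k < N"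
    by (simp_all add: Vidx_def)
  let ?K = "antidiag_comap N G" and ?e = "dlt N (int i + int j - int k + 1)"
  have K_at: "?K (nat (c mod int N)) (nat (a mod int N), nat (b mod int N)) = G a b * dlt N (a + b - c)" for a b c
    by (rule antidiag_comap_mod[OF N per])
  have "mcomp (Vidx N) (rD (stdrep N (a1 * a2) b3)) ?K k (i, j) = a1 * a2 * b3 * G (int i) (int j) * ?e"
    unfolding mcomp_def Vidx_def sum_rD_stdrep_left[OF N]
    using K_at[of "int k - 1" "int i" "int j"] ijk by (simp add: algebra_simps)
  also have "\<dots> = (a1 ^ 2 * a2 * b2 * omg N powi int i * G (int i) (int j + 1) + a1 * b1 * G (int i + 1) (int j)) * ?e"
    by (simp only: rec)
  also have "\<dots> = ?K k (i, nat ((int j + 1) mod int N)) * (a2 * b2) * (a1 ^ 2 * omg N ^ i)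
        + ?K k (nat ((int i + 1) mod int N), j) * (a1 * b1)"
    using K_at[of "int k" "int i" "int j + 1"] K_at[of "int k" "int i + 1" "int j"] ijk
    by (simp add: algebra_simps)
  also have "\<dots> = mcomp (Vidx N \<times> Vidx N) ?K (rD (tensrep (stdrep N a1 b1) (stdrep N a2 b2))) k (i, j)"
    using ijk N by (simp add: tensrep_def mcomp_add_right mcomp_tens_right Vidx_def rE_stdrep
        sum_zdiag_right sum_rD_stdrep_right sum_mid_right)
  finally show "mcomp (Vidx N) (rD (stdrep N (a1 * a2) b3)) ?K k (i, j)
      = mcomp (Vidx N \<times> Vidx N) ?K (rD (tensrep (stdrep N a1 b1) (stdrep N a2 b2))) k (i, j)" .
qed

lemma antidiag_map_is_hom:
  assumes "N > 0" "doubly_periodic N F"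
    and "\<And>i j. a1 ^ 2 * a2 * b2 * omg N powi i * F i (j - 1) + a1 * b1 * F (i - 1) j
      = a1 * a2 * b3 * F i j"
  shows "is_hom (Vidx N) (stdrep N (a1 * a2) b3)
    (Vidx N \<times> Vidx N) (tensrep (stdrep N a1 b1) (stdrep N a2 b2)) (antidiag_map N F)"
  using antidiag_map_commutes_zdiag[of "omg N" N "a1 ^ 2" "a2 ^ 2" F]
    antidiag_map_commutes_zdiag[of "inverse (omg N)" N "inverse a1 ^ 2" "inverse a2 ^ 2" F]
    antidiag_map_commutes_rD[OF assms]
  by (simp add: is_hom_def tensrep_def rE_stdrep rEi_stdrep power_mult_distrib)

lemma antidiag_comap_is_hom:
  assumes "N > 0" "doubly_periodic N G"
    and "\<And>i j. a1 * a2 * b3 * G i j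
      = a1 ^ 2 * a2 * b2 * omg N powi i * G i (j + 1) + a1 * b1 * G (i + 1) j"
  shows "is_hom (Vidx N \<times> Vidx N) (tensrep (stdrep N a1 b1) (stdrep N a2 b2))
    (Vidx N) (stdrep N (a1 * a2) b3) (antidiag_comap N G)"
  using antidiag_comap_commutes_zdiag[of "omg N" N "a1 ^ 2" "a2 ^ 2" G]
    antidiag_comap_commutes_zdiag[of "inverse (omg N)" N "inverse a1 ^ 2" "inverse a2 ^ 2" G]
    antidiag_comap_commutes_rD[OF assms]
  by (simp add: is_hom_def tensrep_def rE_stdrep rEi_stdrep power_mult_distrib)

lemma mcomp_antidiag_comap_map:
  assumes N: "N > 0" and "doubly_periodic N F" "doubly_periodic N G"
  shows "mcomp (Vidx N \<times> Vidx N) (antidiag_comap N G) (antidiag_map N F) k k'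
    = (\<Sum>i\<in>{0..<N}. G (int i) (int k - int i) * F (int i) (int k - int i)) * dlt N (int k - int k')"
proof -
  have column: "(\<Sum>j\<in>{0..<N}. G (int i) (int j) * dlt N (int i + int j - int k)
        * (F (int i) (int j) * dlt N (int i + int j - int k')))
      = G (int i) (int k - int i) * F (int i) (int k - int i) * dlt N (int k - int k')" for i
  proof -
    let ?m = "(int k - int i) mod int N"
    have "(\<Sum>j\<in>{0..<N}. G (int i) (int j) * dlt N (int i + int j - int k)
          * (F (int i) (int j) * dlt N (int i + int j - int k')))
        = (\<Sum>j\<in>{0..<N}. G (int i) (int j) * F (int i) (int j) * dlt N (int i + int j - int k')
          * dlt N (int j - (int k - int i)))"
      by (intro sum.cong) (simp_all add: algebra_simps)
    also have "\<dots> = G (int i) ?m * F (int i) ?m * dlt N (int i + ?m - int k')"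
      using N by (simp add: sum_dlt)
    also have "\<dots> = G (int i) (int k - int i) * F (int i) (int k - int i) * dlt N (int k - int k')"
      using assms(2,3) by (simp add: doubly_periodic_def dlt_add_mod)
    finally show ?thesis .
  qed
  show ?thesis
    by (simp add: mcomp_def Vidx_def sum.cartesian_product' antidiag_map_def antidiag_comap_def
        column sum_distrib_right)
qed

lemma mcomp_antidiag_map_comap:
  assumes "N > 0"
  shows "mcomp (Vidx N) (antidiag_map N F) (antidiag_comap N G) (i, j) (i', j')
    = F (int i) (int j) * G (int i') (int j') * dlt N (int i' + int j' - int i - int j)"
proof -
  have "mcomp (Vidx N) (antidiag_map N F) (antidiag_comap N G) (i, j) (i', j')
      = (\<Sum>k\<in>{0..<N}. F (int i) (int j) * G (int i') (int j') * dlt N (int i' + int j' - int k)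
          * dlt N (int k - (int i + int j)))"
    unfolding mcomp_def Vidx_def antidiag_map_def antidiag_comap_def
    by (intro sum.cong) (simp_all add: dlt_uminus[of N "int k - (int i + int j)" for k, symmetric] mult_ac)
  also have "\<dots> = F (int i) (int j) * G (int i') (int j') * dlt N (int i' + int j' - (int i + int j) mod int N)"
    using assms by (simp add: sum_dlt)
  finally show ?thesis
    by (simp add: dlt_diff_mod algebra_simps)
qed

section \<open>The operators K and Kbar\<close>

locale clebsch_gordan =
  fixes N :: nat and rt :: "complex \<Rightarrow> complex" and h ar yr am ym :: complex
  assumes N_pos: "N > 0" and rt_root: "\<And>u. rt u ^ N = u"
    and yr: "yr \<noteq> 0" and am: "am \<noteq> 0" and h: "h \<noteq> 0"
begin

abbreviation yrm :: complex where "yrm \<equiv> yprod N rt ar yr am ym"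

sublocale fermat_point N "ar * ym" "yr / am" yrm
  using N_pos yr am rt_root
  by unfold_locales (simp_all add: yprod_def power_mult_distrib power_divide divide_inverse power_inverse)

abbreviation phase :: "nat \<Rightarrow> complex" where
  "phase \<alpha> \<equiv> omg_half N ^ nat ((int \<alpha>)\<^sup>2)"

definition K_coeff :: "nat \<Rightarrow> int \<Rightarrow> int \<Rightarrow> complex" where
  "K_coeff \<alpha> i j = h * omg N powi (int \<alpha> * j) * qdl2 N (ar * ym) (yr / am) yrm i (int \<alpha>)"

definition Kbar_coeff :: "nat \<Rightarrow> int \<Rightarrow> int \<Rightarrow> complex" where
  "Kbar_coeff \<alpha> i j = qbr N (ar * ym / yrm) / h
     * (omg N powi (- (int \<alpha> * j)) / qdl2 N (ar * ym / omg N) (yr / am) yrm i (int \<alpha>))"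

lemma Kmap_eq_antidiag_map: "Kmap N rt h ar yr am ym \<alpha> = antidiag_map N (K_coeff \<alpha>)"
  by (intro ext) (auto simp: Kmap_def antidiag_map_def K_coeff_def mult_ac simp flip: of_nat_mult)

lemma Kbar_eq_antidiag_comap: "Kbar N rt h ar yr am ym \<alpha> = antidiag_comap N (Kbar_coeff \<alpha>)"
  by (intro ext) (auto simp: Kbar_def antidiag_comap_def Kbar_coeff_def power_int_minus power_inverse
      mult_ac divide_inverse simp flip: of_nat_mult)

lemma K_coeff_periodic: "doubly_periodic N (K_coeff \<alpha>)"
proof -
  have "qdl N x y z (i mod int N - int \<alpha>) = qdl N x y z (i - int \<alpha>)" for x y z i
    by (rule qdl_cong) (simp add: mod_diff_left_eq)
  moreover have "omg N powi (int \<alpha> * (j mod int N)) = omg N powi (int \<alpha> * j)" for j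
    by (rule omg_powi_cong) (simp add: mod_mult_right_eq)
  ultimately show ?thesis
    by (simp add: doubly_periodic_def K_coeff_def qdl2_def)
qed

lemma Kbar_coeff_periodic: "doubly_periodic N (Kbar_coeff \<alpha>)"
proof -
  have "qdl N x y z (i mod int N - int \<alpha>) = qdl N x y z (i - int \<alpha>)" for x y z i
    by (rule qdl_cong) (simp add: mod_diff_left_eq)
  moreover have "omg N powi (- (int \<alpha> * (j mod int N))) = omg N powi (- (int \<alpha> * j))" for j
    by (intro omg_powi_cong mod_minus_cong) (simp add: mod_mult_right_eq)
  ultimately show ?thesis
    by (simp add: doubly_periodic_def Kbar_coeff_def qdl2_def)
qed

lemma K_coeff_rec:
  "ar ^ 2 * am * ym * omg N powi i * K_coeff \<alpha> i (j - 1) + ar * yr * K_coeff \<alpha> (i - 1) j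
    = ar * am * yrm * K_coeff \<alpha> i j"
proof -
  define Q where "Q = qdl N (ar * ym) (yr / am) yrm (i - int \<alpha>)"
  define Q' where "Q' = qdl N (ar * ym) (yr / am) yrm (i - 1 - int \<alpha>)"
  define W where "W = omg N powi int \<alpha>"
  have "W \<noteq> 0"
    by (simp add: W_def)
  have "yr / am * Q' = (yrm - ar * ym * (omg N powi i / W)) * Q"
    using qdl_functional_equation[of "i - int \<alpha>"] unfolding Q_def Q'_def W_def
    by (simp add: omg_powi_diff algebra_simps)
  then have Q': "Q' = (yrm - ar * ym * (omg N powi i / W)) * Q * am / yr"
    using yr am by (simp add: field_simps)
  have K1: "K_coeff \<alpha> i (j - 1) = h * (omg N powi (int \<alpha> * j) / W) * (Q * phase \<alpha>)"
    by (simp add: K_coeff_def qdl2_def Q_def W_def right_diff_distrib omg_powi_diff)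
  have K2: "K_coeff \<alpha> (i - 1) j = h * omg N powi (int \<alpha> * j) * (Q' * phase \<alpha>)"
    unfolding K_coeff_def qdl2_def Q'_def ..
  have K3: "K_coeff \<alpha> i j = h * omg N powi (int \<alpha> * j) * (Q * phase \<alpha>)"
    unfolding K_coeff_def qdl2_def Q_def ..
  show ?thesis
    unfolding K1 K2 K3 Q' using \<open>W \<noteq> 0\<close> am yr by (simp add: field_simps power2_eq_square)
qed

lemma Kbar_coeff_rec:
  "ar * am * yrm * Kbar_coeff \<alpha> i j
    = ar ^ 2 * am * ym * omg N powi i * Kbar_coeff \<alpha> i (j + 1) + ar * yr * Kbar_coeff \<alpha> (i + 1) j"
proof -
  define B where "B = qdl N (ar * ym / omg N) (yr / am) yrm (i - int \<alpha>)"
  define B' where "B' = qdl N (ar * ym / omg N) (yr / am) yrm (i + 1 - int \<alpha>)"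
  define W where "W = omg N powi int \<alpha>"
  define C where "C = qbr N (ar * ym / yrm) / h"
  have "W \<noteq> 0" and "B \<noteq> 0"
    by (simp_all add: W_def B_def qdl_div_omg_nonzero)
  define P where "P = yrm - ar * ym * (omg N powi i / W)"
  have "yr / am * B = P * B'"
    using qdl_div_omg_functional_equation[of "i + 1 - int \<alpha>"] unfolding B_def B'_def W_def P_def
    by (simp add: omg_powi_diff algebra_simps)
  moreover from this have "P \<noteq> 0"
    using \<open>B \<noteq> 0\<close> yr am by auto
  ultimately have B': "B' = yr / am * B / P"
    by simp
  have "- (int \<alpha> * (j + 1)) = - (int \<alpha> * j) - int \<alpha>"
    by (simp add: algebra_simps)
  then have "omg N powi (- (int \<alpha> * (j + 1))) = omg N powi (- (int \<alpha> * j)) / W"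
    by (simp add: W_def omg_powi_diff)
  then have K1: "Kbar_coeff \<alpha> i (j + 1) = C * (omg N powi (- (int \<alpha> * j)) / W / (B * phase \<alpha>))"
    by (simp add: Kbar_coeff_def qdl2_def B_def C_def)
  have K2: "Kbar_coeff \<alpha> (i + 1) j = C * (omg N powi (- (int \<alpha> * j)) / (B' * phase \<alpha>))"
    unfolding Kbar_coeff_def qdl2_def B'_def C_def ..
  have K3: "Kbar_coeff \<alpha> i j = C * (omg N powi (- (int \<alpha> * j)) / (B * phase \<alpha>))"
    unfolding Kbar_coeff_def qdl2_def B_def C_def ..
  show ?thesis
    unfolding K1 K2 K3 B' using \<open>W \<noteq> 0\<close> \<open>B \<noteq> 0\<close> \<open>P \<noteq> 0\<close> am yr
    by (simp add: P_def field_simps power2_eq_square)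
qed

lemma Kmap_is_hom:
  "is_hom (Vidx N) (stdrep N (ar * am) yrm)
     (Vidx N \<times> Vidx N) (tensrep (stdrep N ar yr) (stdrep N am ym)) (Kmap N rt h ar yr am ym \<alpha>)"
  unfolding Kmap_eq_antidiag_map
  by (rule antidiag_map_is_hom[OF N_pos K_coeff_periodic K_coeff_rec])

lemma Kbar_is_hom:
  "is_hom (Vidx N \<times> Vidx N) (tensrep (stdrep N ar yr) (stdrep N am ym))
     (Vidx N) (stdrep N (ar * am) yrm) (Kbar N rt h ar yr am ym \<alpha>)"
  unfolding Kbar_eq_antidiag_comap
  by (rule antidiag_comap_is_hom[OF N_pos Kbar_coeff_periodic Kbar_coeff_rec])

lemma yprod_nonzero_if_cyclic:
  assumes "cyclic_rep (Vidx N \<times> Vidx N) (tensrep (stdrep N ar yr) (stdrep N am ym))"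
  shows "yrm \<noteq> 0"
proof
  \<comment> \<open>If \<open>y\<^sub>\<rho>\<^sub>\<mu> = 0\<close> then \<open>D\<close> acts by zero on \<open>V\<^sub>\<rho>\<^sub>\<mu>\<close>, so the intertwiner \<open>K\<^sub>0\<close> is
    killed by the invertible \<open>D\<close> of \<open>\<rho> \<otimes> \<mu>\<close>; but its entry at \<open>((0,0),0)\<close> is \<open>h\<close>.\<close>
  assume "yrm = 0"
  let ?V2 = "Vidx N \<times> Vidx N" and ?D = "rD (tensrep (stdrep N ar yr) (stdrep N am ym))"
  let ?K = "Kmap N rt h ar yr am ym 0"
  obtain Dinv where Dinv: "meq ?V2 ?V2 (mcomp ?V2 Dinv ?D) mid"
    using assms unfolding cyclic_rep_def minvertible_def by blast
  have "meq ?V2 (Vidx N) (mcomp ?V2 ?D ?K) (mcomp (Vidx N) ?K (rD (stdrep N (ar * am) yrm)))"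
    using Kmap_is_hom[of 0] unfolding is_hom_def by blast
  moreover have "rD (stdrep N (ar * am) yrm) = (\<lambda>_ _. 0)"
    using \<open>yrm = 0\<close> by (simp add: stdrep_def)
  ultimately have DK: "meq ?V2 (Vidx N) (mcomp ?V2 ?D ?K) (\<lambda>_ _. 0)"
    by (simp add: meq_def mcomp_def)
  have "(0, 0) \<in> ?V2" "(0::nat) \<in> Vidx N" "finite ?V2"
    using N_pos by (simp_all add: Vidx_def)
  then have "?K (0, 0) 0 = mcomp ?V2 mid ?K (0, 0) 0"
    using mcomp_scaled_mid_left[of ?V2 "(0, 0)" 1 ?K 0] by simp
  also have "\<dots> = mcomp ?V2 (mcomp ?V2 Dinv ?D) ?K (0, 0) 0"
    by (rule mcomp_cong_left[OF Dinv \<open>(0, 0) \<in> ?V2\<close>, symmetric])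
  also have "\<dots> = mcomp ?V2 Dinv (mcomp ?V2 ?D ?K) (0, 0) 0"
    using \<open>finite ?V2\<close> by (simp add: mcomp_assoc)
  also have "\<dots> = 0"
  proof -
    have "mcomp ?V2 ?D ?K p 0 = 0" if "p \<in> ?V2" for p
      using DK that \<open>0 \<in> Vidx N\<close> unfolding meq_def by blast
    then show ?thesis
      unfolding mcomp_def[of ?V2 Dinv] by (auto intro: sum.neutral)
  qed
  finally have "?K (0, 0) 0 = 0" .
  moreover have "?K (0, 0) 0 = h"
    by (simp add: Kmap_def qdl2_def dlt_def)
  ultimately show False
    using h by simp
qed

lemma K_coeff_mult_Kbar_coeff:
  "K_coeff \<beta> i j * Kbar_coeff \<alpha> i' j' = qbr N (ar * ym / yrm) * (phase \<beta> / phase \<alpha>)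
     * omg N powi (int \<beta> * j - int \<alpha> * j')
     * (qdl N (ar * ym) (yr / am) yrm (i - int \<beta>) / qdl N (ar * ym / omg N) (yr / am) yrm (i' - int \<alpha>))"
  using h qdl_div_omg_nonzero[of "i' - int \<alpha>"]
  by (simp add: K_coeff_def Kbar_coeff_def qdl2_def omg_powi_diff power_int_minus field_simps)

lemma Kbar_Kmap_dual:
  assumes "yrm \<noteq> 0" and "\<alpha> < N" "\<beta> < N"
  shows "meq (Vidx N) (Vidx N)
    (mcomp (Vidx N \<times> Vidx N) (Kbar N rt h ar yr am ym \<alpha>) (Kmap N rt h ar yr am ym \<beta>))
    (\<lambda>x y. dlt N (int \<alpha> - int \<beta>) * mid x y)"
  unfolding meq_def
proof (intro ballI)
  fix k k' assume "k \<in> Vidx N" "k' \<in> Vidx N"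
  then have "k < N" "k' < N"
    by (simp_all add: Vidx_def)
  define d where "d = int \<beta> - int \<alpha>"
  let ?ratio = "\<lambda>m. omg N powi (- (m * d)) * qdl_ratio N (ar * ym) (yr / am) yrm d m"
  let ?c = "qbr N (ar * ym / yrm) * (phase \<beta> / phase \<alpha>) * omg N powi (d * (int k - int \<beta>))"
  have entry: "Kbar_coeff \<alpha> (int i) (int k - int i) * K_coeff \<beta> (int i) (int k - int i) = ?c * ?ratio (int i + - int \<beta>)" for i
  proof -
    have "omg N powi (int \<beta> * (int k - int i) - int \<alpha> * (int k - int i))
        = omg N powi (d * (int k - int \<beta>)) * omg N powi (- ((int i + - int \<beta>) * d))"
      by (simp add: d_def flip: omg_powi_add) (simp add: algebra_simps)
    moreover have "qdl N (ar * ym / omg N) (yr / am) yrm (int i + - int \<beta> + d)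
        = qdl N (ar * ym / omg N) (yr / am) yrm (int i - int \<alpha>)"
      by (simp add: d_def)
    ultimately show ?thesis
      by (simp add: mult.commute[of "Kbar_coeff _ _ _"] K_coeff_mult_Kbar_coeff qdl_ratio_def mult_ac)
  qed
  have "mcomp (Vidx N \<times> Vidx N) (Kbar N rt h ar yr am ym \<alpha>) (Kmap N rt h ar yr am ym \<beta>) k k'
      = (\<Sum>i\<in>{0..<N}. ?c * ?ratio (int i + - int \<beta>)) * dlt N (int k - int k')"
    by (simp add: Kbar_eq_antidiag_comap Kmap_eq_antidiag_map mcomp_antidiag_comap_map[OF N_pos]
        K_coeff_periodic Kbar_coeff_periodic entry)
  also have "\<dots> = ?c * qdl_ratio_sum N (ar * ym) (yr / am) yrm d * dlt N (int k - int k')"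
    unfolding sum_distrib_left[symmetric] qdl_ratio_sum_shift[OF N_pos] ..
  also have "\<dots> = dlt N (int \<alpha> - int \<beta>) * mid k k'"
    using \<open>k < N\<close> \<open>k' < N\<close> assms(2,3)
    using qdl_ratio_sum_orthogonality[OF assms(1), of d]
    by (cases "\<alpha> = \<beta>") (simp_all add: d_def dlt_of_nat_diff mid_def)
  finally show "mcomp (Vidx N \<times> Vidx N) (Kbar N rt h ar yr am ym \<alpha>) (Kmap N rt h ar yr am ym \<beta>) k k'
      = dlt N (int \<alpha> - int \<beta>) * mid k k'" .
qed

lemma Kmap_Kbar_complete:
  assumes "yrm \<noteq> 0"
  shows "meq (Vidx N \<times> Vidx N) (Vidx N \<times> Vidx N)
    (\<lambda>p q. \<Sum>\<alpha><N. mcomp (Vidx N) (Kmap N rt h ar yr am ym \<alpha>) (Kbar N rt h ar yr am ym \<alpha>) p q) mid"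
  unfolding meq_def
proof (intro ballI, clarify)
  fix i j i' j' assume "i \<in> Vidx N" "j \<in> Vidx N" "i' \<in> Vidx N" "j' \<in> Vidx N"
  then have ij: "i < N" "j < N" "i' < N" "j' < N"
    by (simp_all add: Vidx_def)
  define D where "D = dlt N (int i' + int j' - int i - int j)"
  define d where "d = int i' - int i"
  let ?ratio = "\<lambda>m. omg N powi (- (m * d)) * qdl_ratio N (ar * ym) (yr / am) yrm d m"
  have sum: "(\<Sum>\<alpha><N. mcomp (Vidx N) (Kmap N rt h ar yr am ym \<alpha>) (Kbar N rt h ar yr am ym \<alpha>) (i, j) (i', j'))
      = (\<Sum>\<alpha>\<in>{0..<N}. K_coeff \<alpha> (int i) (int j) * Kbar_coeff \<alpha> (int i') (int j')) * D"
    by (simp add: Kmap_eq_antidiag_map Kbar_eq_antidiag_comap mcomp_antidiag_map_comap[OF N_pos]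
        D_def sum_distrib_right atLeast0LessThan)
  show "(\<Sum>\<alpha><N. mcomp (Vidx N) (Kmap N rt h ar yr am ym \<alpha>) (Kbar N rt h ar yr am ym \<alpha>) (i, j) (i', j'))
      = mid (i, j) (i', j')"
  proof (cases "D = 0")
    case True
    then have "(i, j) \<noteq> (i', j')"
      by (auto simp: D_def dlt_def)
    then show ?thesis
      using True by (simp add: sum mid_def)
  next
    case False
    then have "int N dvd (int i' + int j') - (int i + int j)"
      by (simp add: D_def dlt_diff mod_eq_dvd_iff diff_diff_eq split: if_splits)
    moreover have "(int j - int j') - d = - ((int i' + int j') - (int i + int j))"
      by (simp add: d_def)
    ultimately have "(int j - int j') mod int N = d mod int N"
      by (simp only: mod_eq_dvd_iff dvd_minus_iff)
    then have entry: "K_coeff \<alpha> (int i) (int j) * Kbar_coeff \<alpha> (int i') (int j')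
        = qbr N (ar * ym / yrm) * omg N powi (int i * d) * ?ratio (int i - int \<alpha>)" for \<alpha>
    proof -
      have "omg N powi (int \<alpha> * int j - int \<alpha> * int j') = omg N powi (int \<alpha> * d)"
        using \<open>(int j - int j') mod int N = d mod int N\<close>
        by (intro omg_powi_cong) (metis mod_mult_right_eq right_diff_distrib)
      also have "\<dots> = omg N powi (int i * d) * omg N powi (- ((int i - int \<alpha>) * d))"
        by (simp flip: omg_powi_add add: algebra_simps)
      moreover have "qdl N (ar * ym / omg N) (yr / am) yrm (int i - int \<alpha> + d)
          = qdl N (ar * ym / omg N) (yr / am) yrm (int i' - int \<alpha>)"
        by (simp add: d_def)
      ultimately show ?thesis
        using omg_half_nonzero by (simp add: K_coeff_mult_Kbar_coeff qdl_ratio_def mult_ac)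
    qed
    have "(\<Sum>\<alpha>\<in>{0..<N}. K_coeff \<alpha> (int i) (int j) * Kbar_coeff \<alpha> (int i') (int j'))
        = omg N powi (int i * d) * (qbr N (ar * ym / yrm) * qdl_ratio_sum N (ar * ym) (yr / am) yrm d)"
      unfolding entry mult.assoc sum_distrib_left[symmetric] qdl_ratio_sum_reflect[OF N_pos] by (simp only: mult_ac)
    also have "\<dots> = omg N powi (int i * d) * dlt N d"
      by (simp add: qdl_ratio_sum_orthogonality[OF assms])
    finally have "(\<Sum>\<alpha><N. mcomp (Vidx N) (Kmap N rt h ar yr am ym \<alpha>) (Kbar N rt h ar yr am ym \<alpha>) (i, j) (i', j'))
        = omg N powi (int i * d) * dlt N d * D"
      by (simp add: sum)
    moreover have "D = 1"
      using False by (simp add: D_def dlt_def split: if_splits)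
    moreover have "i = i' \<Longrightarrow> j = j'"
    proof -
      assume "i = i'"
      then have "int j mod int N = int j' mod int N"
        using \<open>(int j - int j') mod int N = d mod int N\<close>
        by (simp add: d_def mod_eq_dvd_iff dvd_eq_mod_eq_0[symmetric])
      then show "j = j'"
        using ij by simp
    qed
    ultimately show ?thesis
      using ij by (auto simp: d_def dlt_of_nat_diff mid_def)
  qed
qed

end

theorem proposition5p1:
  fixes N :: nat and rt :: "complex \<Rightarrow> complex" and h ar yr am ym :: complex
  assumes "odd N" and "N \<ge> 3"
    and "\<forall>u. rt u ^ N = u"
    and "ar \<noteq> 0" and "yr \<noteq> 0" and "am \<noteq> 0" and "ym \<noteq> 0"
    and "cyclic_rep (Vidx N \<times> Vidx N) (tensrep (stdrep N ar yr) (stdrep N am ym))"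
    and "h \<noteq> 0"
  shows
    "is_hom_basis N (Vidx N) (stdrep N (ar * am) (yprod N rt ar yr am ym))
        (Vidx N \<times> Vidx N) (tensrep (stdrep N ar yr) (stdrep N am ym))
        (Kmap N rt h ar yr am ym)
   \<and> is_hom_basis N (Vidx N \<times> Vidx N) (tensrep (stdrep N ar yr) (stdrep N am ym))
        (Vidx N) (stdrep N (ar * am) (yprod N rt ar yr am ym))
        (Kbar N rt h ar yr am ym)
   \<and> (\<forall>\<alpha><N. \<forall>\<beta><N.
        meq (Vidx N) (Vidx N)
          (mcomp (Vidx N \<times> Vidx N) (Kbar N rt h ar yr am ym \<alpha>) (Kmap N rt h ar yr am ym \<beta>))
          (\<lambda>x y. dlt N (int \<alpha> - int \<beta>) * mid x y))
   \<and> meq (Vidx N \<times> Vidx N) (Vidx N \<times> Vidx N)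
        (\<lambda>x y. \<Sum>\<alpha><N. mcomp (Vidx N) (Kmap N rt h ar yr am ym \<alpha>) (Kbar N rt h ar yr am ym \<alpha>) x y)
        (tens mid mid)"
proof -
  interpret clebsch_gordan N rt h ar yr am ym
    using assms by unfold_locales auto
  have y: "yrm \<noteq> 0"
    by (rule yprod_nonzero_if_cyclic[OF assms(8)])
  have schur: "meq (Vidx N) (Vidx N) M (\<lambda>x y. M 0 0 * mid x y)"
    if "is_hom (Vidx N) (stdrep N (ar * am) yrm) (Vidx N) (stdrep N (ar * am) yrm) M" for M
    using stdrep_endomorphism_scalar[OF N_pos _ y that] assms(4,6) by simp
  show ?thesis
    using is_hom_basis_if_dual[where base = 0, OF _ _ _ Kmap_is_hom Kbar_is_hom
        Kbar_Kmap_dual[OF y] Kmap_Kbar_complete[OF y] schur]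
      Kbar_Kmap_dual[OF y] Kmap_Kbar_complete[OF y] N_pos
    by (simp add: Vidx_def tens_mid)
qed

end
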